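(* Let $0\le\epsilon<1$ and let $\rho^{AB}$ be a quantum state on a finite-dimensional bipartite system $AB$ with marginals $\rho^A,\rho^B$. Then $$I^\epsilon_H(A:B)_\rho\ \le\ 2\log_2\min\{|A|,|B|\}+3\log_2\frac{1}{1-\epsilon}+6\log_2 3-4,$$ where $|A|,|B|$ are the dimensions of the systems.
   Context: For quantum states $\alpha,\beta$ on the same finite-dimensional Hilbert space and $0\le\epsilon<1$, $D^\epsilon_H(\alpha\|\beta):=\max_\Pi -\log_2\operatorname{Tr}[\Pi\beta]$, the maximum over POVM elements $0\le\Pi\le\mathbb{1}$ with $\operatorname{Tr}[\Pi\alpha]\ge 1-\epsilon$. The hypothesis testing mutual information is $I^\epsilon_H(A:B)_\rho:=D^\epsilon_H(\rho^{AB}\|\rho^A\otimes\rho^B)$. *)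

theory Defs
  imports Complex_Main "HOL-Library.Extended_Real" "Jordan_Normal_Form.Matrix" "Jordan_Normal_Form.Conjugate"
begin

(* Quantum objects on C^n are n x n complex matrices (Jordan_Normal_Form).
   A bipartite system AB with dim A = dA, dim B = dB is C^(dA*dB) with
   basis index  a*dB + b  for |a>|b>  (a < dA, b < dB). *)

definition mat_trace :: "complex mat \<Rightarrow> complex" where
  "mat_trace M = (\<Sum>i<dim_row M. M $$ (i, i))"

definition hermitian_mat :: "nat \<Rightarrow> complex mat \<Rightarrow> bool" where
  "hermitian_mat n M \<longleftrightarrow> M \<in> carrier_mat n n \<and>
     (\<forall>i<n. \<forall>j<n. M $$ (i, j) = cnj (M $$ (j, i)))"

definition psd_mat :: "nat \<Rightarrow> complex mat \<Rightarrow> bool" where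
  "psd_mat n M \<longleftrightarrow> hermitian_mat n M \<and>
     (\<forall>v \<in> carrier_vec n. 0 \<le> Re (conjugate v \<bullet> (M *\<^sub>v v)))"

definition density_mat :: "nat \<Rightarrow> complex mat \<Rightarrow> bool" where
  "density_mat n M \<longleftrightarrow> psd_mat n M \<and> mat_trace M = 1"

definition povm_elem :: "nat \<Rightarrow> complex mat \<Rightarrow> bool" where
  "povm_elem n P \<longleftrightarrow> psd_mat n P \<and> psd_mat n (1\<^sub>m n - P)"

definition kron :: "nat \<Rightarrow> nat \<Rightarrow> complex mat \<Rightarrow> complex mat \<Rightarrow> complex mat" where
  "kron dA dB X Y = mat (dA * dB) (dA * dB)
     (\<lambda>(i, j). X $$ (i div dB, j div dB) * Y $$ (i mod dB, j mod dB))"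

definition marg_A :: "nat \<Rightarrow> nat \<Rightarrow> complex mat \<Rightarrow> complex mat" where
  "marg_A dA dB R = mat dA dA (\<lambda>(a, a'). \<Sum>b<dB. R $$ (a * dB + b, a' * dB + b))"

definition marg_B :: "nat \<Rightarrow> nat \<Rightarrow> complex mat \<Rightarrow> complex mat" where
  "marg_B dA dB R = mat dB dB (\<lambda>(b, b'). \<Sum>a<dA. R $$ (a * dB + b, a * dB + b'))"

definition hyp_test_div :: "nat \<Rightarrow> real \<Rightarrow> complex mat \<Rightarrow> complex mat \<Rightarrow> ereal" where
  "hyp_test_div n eps \<alpha> \<beta> =
     (SUP P \<in> {P. povm_elem n P \<and> Re (mat_trace (P * \<alpha>)) \<ge> 1 - eps}.
        (if Re (mat_trace (P * \<beta>)) = 0 then \<infinity> else ereal (- log 2 (Re (mat_trace (P * \<beta>))))))"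

definition hyp_test_MI :: "nat \<Rightarrow> nat \<Rightarrow> real \<Rightarrow> complex mat \<Rightarrow> ereal" where
  "hyp_test_MI dA dB eps R =
     hyp_test_div (dA * dB) eps R (kron dA dB (marg_A dA dB R) (marg_B dA dB R))"

end

theory Submission
  imports Defs "Jordan_Normal_Form.Determinant"
begin

text \<open>Fix an admissible test P with t = tr (P \<rho>) \<ge> 1 - \<epsilon>, and say d = |A| \<le> |B|. Write \<sigma>A, \<sigma>B
  for the marginals. Then \<rho> \<le> d (1 \<otimes> \<sigma>B), and for Q = \<sigma>A (\<sigma>A + \<delta>)^-1 one has \<delta> Q^2 \<le> \<sigma>A,
  hence \<delta> (Q \<otimes> 1) (1 \<otimes> \<sigma>B) (Q \<otimes> 1) \<le> \<sigma>A \<otimes> \<sigma>B. A gentle-measurement argument shows that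
  sandwiching \<rho> between Q \<otimes> 1 loses at most \<eta> + 2 sqrt \<eta> of the weight t, where
  \<eta> = tr \<sigma>A (1 - Q)^2 \<le> d \<delta> / 4. Choosing \<delta> = 4 t^2 / (9 d) gives
  tr (P (\<sigma>A \<otimes> \<sigma>B)) \<ge> 8 t^3 / (81 d^2), and taking -log2 yields the bound.\<close>

section \<open>Adjoints and traces\<close>

lemma mat_mult_index_sum:
  assumes "A \<in> carrier_mat n k" "B \<in> carrier_mat k m" "i < n" "j < m"
  shows "(A * B) $$ (i, j) = (\<Sum>l<k. A $$ (i, l) * B $$ (l, j))"
  using assms by (auto simp: scalar_prod_def atLeast0LessThan intro!: sum.cong)

lemma row_col_scalar_prod [simp]:
  assumes "A \<in> carrier_mat n k" "B \<in> carrier_mat k m" "i < n" "j < m"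
  shows "row A i \<bullet> col B j = (\<Sum>l<k. A $$ (i, l) * B $$ (l, j))"
  using mat_mult_index_sum[OF assms] assms by simp

definition adjoint :: "complex mat \<Rightarrow> complex mat" where
  "adjoint A = mat (dim_col A) (dim_row A) (\<lambda>(i, j). cnj (A $$ (j, i)))"

lemma adjoint_dims [simp]:
  "dim_row (adjoint A) = dim_col A" "dim_col (adjoint A) = dim_row A"
  unfolding adjoint_def by simp_all

lemma adjoint_index [simp]:
  "i < dim_col A \<Longrightarrow> j < dim_row A \<Longrightarrow> adjoint A $$ (i, j) = cnj (A $$ (j, i))"
  unfolding adjoint_def by simp

lemma adjoint_carrier [simp]: "A \<in> carrier_mat n m \<Longrightarrow> adjoint A \<in> carrier_mat m n"
  unfolding carrier_mat_def by simp

lemma adjoint_adjoint [simp]: "adjoint (adjoint A) = A"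
  by (rule eq_matI) auto

lemma mult_carrier_mat_square [simp]:
  "A \<in> carrier_mat n n \<Longrightarrow> B \<in> carrier_mat n n \<Longrightarrow> A * B \<in> carrier_mat n n"
  by (rule mult_carrier_mat)

lemma adjoint_mult:
  assumes "A \<in> carrier_mat n k" "B \<in> carrier_mat k m"
  shows "adjoint (A * B) = adjoint B * adjoint A"
proof (rule eq_matI)
  fix i j assume "i < dim_row (adjoint B * adjoint A)" "j < dim_col (adjoint B * adjoint A)"
  then have ij: "i < m" "j < n" using assms by auto
  have "adjoint (A * B) $$ (i, j) = (\<Sum>l<k. cnj (B $$ (l, i)) * cnj (A $$ (j, l)))"
    using ij assms by (simp add: mat_mult_index_sum[OF assms] mult.commute)
  also have "\<dots> = (adjoint B * adjoint A) $$ (i, j)"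
    using ij assms by (subst mat_mult_index_sum[of _ m k _ n]) auto
  finally show "adjoint (A * B) $$ (i, j) = (adjoint B * adjoint A) $$ (i, j)" .
qed (use assms in auto)

lemma adjoint_add:
  "A \<in> carrier_mat n m \<Longrightarrow> B \<in> carrier_mat n m \<Longrightarrow> adjoint (A + B) = adjoint A + adjoint B"
  by (rule eq_matI) auto

lemma adjoint_minus:
  "A \<in> carrier_mat n m \<Longrightarrow> B \<in> carrier_mat n m \<Longrightarrow> adjoint (A - B) = adjoint A - adjoint B"
  by (rule eq_matI) auto

lemma adjoint_smult: "adjoint (c \<cdot>\<^sub>m A) = cnj c \<cdot>\<^sub>m adjoint A"
  by (rule eq_matI) auto

lemma adjoint_one [simp]: "adjoint (1\<^sub>m n) = 1\<^sub>m n"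
  by (rule eq_matI) auto

lemma hermitian_mat_iff_adjoint:
  "hermitian_mat n M \<longleftrightarrow> M \<in> carrier_mat n n \<and> adjoint M = M"
proof
  assume h: "hermitian_mat n M"
  then have c: "M \<in> carrier_mat n n" by (simp add: hermitian_mat_def)
  moreover have "adjoint M = M"
  proof (rule eq_matI)
    fix i j assume "i < dim_row M" "j < dim_col M"
    then show "adjoint M $$ (i, j) = M $$ (i, j)"
      using c h unfolding hermitian_mat_def by (metis adjoint_index carrier_matD complex_cnj_cnj)
  qed (use c in simp_all)
  ultimately show "M \<in> carrier_mat n n \<and> adjoint M = M" by simp
next
  assume a: "M \<in> carrier_mat n n \<and> adjoint M = M"
  have "M $$ (i, j) = cnj (M $$ (j, i))" if "i < n" "j < n" for i j
    using a that adjoint_index[of i M j] by auto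
  then show "hermitian_mat n M" using a unfolding hermitian_mat_def by blast
qed

lemma trace_mult_comm:
  assumes "A \<in> carrier_mat n m" "B \<in> carrier_mat m n"
  shows "mat_trace (A * B) = mat_trace (B * A)"
proof -
  have "mat_trace (A * B) = (\<Sum>i<n. \<Sum>l<m. A $$ (i, l) * B $$ (l, i))"
    unfolding mat_trace_def using assms by (auto simp: mat_mult_index_sum intro!: sum.cong)
  also have "\<dots> = (\<Sum>l<m. \<Sum>i<n. B $$ (l, i) * A $$ (i, l))"
    by (subst sum.swap) (simp add: mult.commute)
  also have "\<dots> = mat_trace (B * A)"
    unfolding mat_trace_def using assms by (auto simp: mat_mult_index_sum intro!: sum.cong)
  finally show ?thesis .
qed

lemma trace_sandwich:
  assumes "S \<in> carrier_mat n n" "A \<in> carrier_mat n n"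
  shows "mat_trace (S * A * S) = mat_trace (A * (S * S))"
proof -
  have "mat_trace (S * A * S) = mat_trace (S * (S * A))"
    using trace_mult_comm[of "S * A" n n S] assms by simp
  also have "\<dots> = mat_trace (A * (S * S))"
    using trace_mult_comm[of "S * S" n n A] assoc_mult_mat[of S n n S n A n] assms by simp
  finally show ?thesis .
qed

lemma trace_add:
  "A \<in> carrier_mat n n \<Longrightarrow> B \<in> carrier_mat n n \<Longrightarrow> mat_trace (A + B) = mat_trace A + mat_trace B"
  by (auto simp: mat_trace_def sum.distrib)

lemma trace_minus:
  "A \<in> carrier_mat n n \<Longrightarrow> B \<in> carrier_mat n n \<Longrightarrow> mat_trace (A - B) = mat_trace A - mat_trace B"
  by (auto simp: mat_trace_def sum_subtractf)

lemma trace_smult: "A \<in> carrier_mat n n \<Longrightarrow> mat_trace (c \<cdot>\<^sub>m A) = c * mat_trace A"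
  by (simp add: mat_trace_def sum_distrib_left)

lemma trace_one: "mat_trace (1\<^sub>m n) = of_nat n"
  by (simp add: mat_trace_def)

lemma trace_adjoint: "A \<in> carrier_mat n n \<Longrightarrow> mat_trace (adjoint A) = cnj (mat_trace A)"
  by (simp add: mat_trace_def)

section \<open>Sesquilinear forms and positive semidefinite matrices\<close>

definition sesq :: "complex mat \<Rightarrow> (nat \<Rightarrow> complex) \<Rightarrow> (nat \<Rightarrow> complex) \<Rightarrow> complex" where
  "sesq M x y = (\<Sum>i<dim_row M. \<Sum>j<dim_col M. cnj (x i) * M $$ (i, j) * y j)"

lemma sesq_carrier:
  "M \<in> carrier_mat n n \<Longrightarrow> sesq M x y = (\<Sum>i<n. \<Sum>j<n. cnj (x i) * M $$ (i, j) * y j)"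
  by (simp add: sesq_def)

lemma sesq_vec:
  assumes "M \<in> carrier_mat n n"
  shows "conjugate (vec n x) \<bullet> (M *\<^sub>v vec n x) = sesq M x x"
proof -
  have "conjugate (vec n x) \<bullet> (M *\<^sub>v vec n x) = (\<Sum>i<n. cnj (x i) * (row M i \<bullet> vec n x))"
    using assms by (simp add: scalar_prod_def atLeast0LessThan)
  also have "\<dots> = (\<Sum>i<n. cnj (x i) * (\<Sum>j<n. M $$ (i, j) * x j))"
    using assms by (intro sum.cong refl) (simp add: scalar_prod_def atLeast0LessThan)
  also have "\<dots> = sesq M x x"
    using assms by (simp add: sesq_carrier sum_distrib_left mult.assoc)
  finally show ?thesis .
qed

lemma psd_mat_iff_sesq:
  "psd_mat n M \<longleftrightarrow> M \<in> carrier_mat n n \<and> adjoint M = M \<and> (\<forall>x. 0 \<le> Re (sesq M x x))"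
proof -
  have "(\<forall>v \<in> carrier_vec n. 0 \<le> Re (conjugate v \<bullet> (M *\<^sub>v v))) \<longleftrightarrow> (\<forall>x. 0 \<le> Re (sesq M x x))"
    if "M \<in> carrier_mat n n"
  proof
    assume "\<forall>v \<in> carrier_vec n. 0 \<le> Re (conjugate v \<bullet> (M *\<^sub>v v))"
    then show "\<forall>x. 0 \<le> Re (sesq M x x)" using sesq_vec[OF that] vec_carrier by metis
  next
    assume "\<forall>x. 0 \<le> Re (sesq M x x)"
    moreover have "v = vec n (\<lambda>i. v $ i)" if "v \<in> carrier_vec n" for v :: "complex vec"
      using that by auto
    ultimately show "\<forall>v \<in> carrier_vec n. 0 \<le> Re (conjugate v \<bullet> (M *\<^sub>v v))"
      using sesq_vec[OF that] by (metis (no_types))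
  qed
  then show ?thesis unfolding psd_mat_def hermitian_mat_iff_adjoint by blast
qed

lemma psd_mat_carrier: "psd_mat n M \<Longrightarrow> M \<in> carrier_mat n n"
  by (simp add: psd_mat_iff_sesq)

lemma psd_mat_adjoint: "psd_mat n M \<Longrightarrow> adjoint M = M"
  by (simp add: psd_mat_iff_sesq)

lemma psd_mat_sesq_nonneg: "psd_mat n M \<Longrightarrow> 0 \<le> Re (sesq M x x)"
  by (simp add: psd_mat_iff_sesq)

lemma psd_mat_entry:
  "psd_mat n M \<Longrightarrow> i < n \<Longrightarrow> j < n \<Longrightarrow> M $$ (i, j) = cnj (M $$ (j, i))"
  unfolding psd_mat_def hermitian_mat_def by blast

lemma sesq_add: assumes "A \<in> carrier_mat n n" "B \<in> carrier_mat n n"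
  shows "sesq (A + B) x y = sesq A x y + sesq B x y"
proof -
  have c: "A + B \<in> carrier_mat n n" using assms by simp
  have "sesq (A + B) x y = (\<Sum>i<n. \<Sum>j<n. cnj (x i) * A $$ (i, j) * y j + cnj (x i) * B $$ (i, j) * y j)"
    unfolding sesq_carrier[OF c] using assms by (intro sum.cong refl) (simp add: distrib_left distrib_right)
  then show ?thesis unfolding sesq_carrier[OF assms(1)] sesq_carrier[OF assms(2)] by (simp add: sum.distrib)
qed

lemma sesq_minus: assumes "A \<in> carrier_mat n n" "B \<in> carrier_mat n n"
  shows "sesq (A - B) x y = sesq A x y - sesq B x y"
proof -
  have c: "A - B \<in> carrier_mat n n" using assms by (simp add: minus_carrier_mat)
  have "sesq (A - B) x y = (\<Sum>i<n. \<Sum>j<n. cnj (x i) * A $$ (i, j) * y j - cnj (x i) * B $$ (i, j) * y j)"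
    unfolding sesq_carrier[OF c] using assms by (intro sum.cong refl) (simp add: right_diff_distrib left_diff_distrib)
  then show ?thesis unfolding sesq_carrier[OF assms(1)] sesq_carrier[OF assms(2)] by (simp add: sum_subtractf)
qed

lemma sesq_smult: assumes "A \<in> carrier_mat n n" shows "sesq (c \<cdot>\<^sub>m A) x y = c * sesq A x y"
proof -
  have cc: "c \<cdot>\<^sub>m A \<in> carrier_mat n n" using assms by simp
  have "sesq (c \<cdot>\<^sub>m A) x y = (\<Sum>i<n. \<Sum>j<n. c * (cnj (x i) * A $$ (i, j) * y j))"
    unfolding sesq_carrier[OF cc] using assms by (intro sum.cong refl) (simp add: mult.left_commute)
  then show ?thesis unfolding sesq_carrier[OF assms(1)] by (simp add: sum_distrib_left)
qed

lemma sesq_lin_right: assumes "M \<in> carrier_mat n n"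
  shows "sesq M z (\<lambda>i. x i + c * y i) = sesq M z x + c * sesq M z y"
proof -
  have "sesq M z (\<lambda>i. x i + c * y i) = (\<Sum>i<n. \<Sum>j<n. cnj (z i) * M $$ (i, j) * x j + c * (cnj (z i) * M $$ (i, j) * y j))"
    unfolding sesq_carrier[OF assms] by (intro sum.cong refl) (simp add: distrib_left mult.left_commute)
  then show ?thesis unfolding sesq_carrier[OF assms] by (simp add: sum.distrib sum_distrib_left)
qed

lemma sesq_lin_left: assumes "M \<in> carrier_mat n n"
  shows "sesq M (\<lambda>i. x i + c * y i) z = sesq M x z + cnj c * sesq M y z"
proof -
  have "sesq M (\<lambda>i. x i + c * y i) z = (\<Sum>i<n. \<Sum>j<n. cnj (x i) * M $$ (i, j) * z j + cnj c * (cnj (y i) * M $$ (i, j) * z j))"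
    unfolding sesq_carrier[OF assms] by (intro sum.cong refl) (simp add: distrib_left distrib_right mult.left_commute)
  then show ?thesis unfolding sesq_carrier[OF assms] by (simp add: sum.distrib sum_distrib_left)
qed

lemma sesq_hermitian_swap: "M \<in> carrier_mat n n \<Longrightarrow> adjoint M = M \<Longrightarrow> sesq M y x = cnj (sesq M x y)"
proof -
  assume c: "M \<in> carrier_mat n n" and h: "adjoint M = M"
  have e: "M $$ (j, i) = cnj (M $$ (i, j))" if "i < n" "j < n" for i j
  proof -
    have "adjoint M $$ (i, j) = cnj (M $$ (j, i))" using that c by simp
    then show ?thesis using h by simp
  qed
  have "sesq M y x = (\<Sum>j<n. \<Sum>i<n. cnj (y j) * M $$ (j, i) * x i)" using c by (simp add: sesq_carrier)
  also have "\<dots> = (\<Sum>i<n. \<Sum>j<n. cnj (y j) * M $$ (j, i) * x i)" by (rule sum.swap)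
  also have "\<dots> = (\<Sum>i<n. \<Sum>j<n. cnj (cnj (x i) * M $$ (i, j) * y j))"
  proof (intro sum.cong refl)
    fix i j assume "i \<in> {..<n}" "j \<in> {..<n}"
    then have "M $$ (j, i) = cnj (M $$ (i, j))" using e[of i j] by simp
    then show "cnj (y j) * M $$ (j, i) * x i = cnj (cnj (x i) * M $$ (i, j) * y j)"
      by (simp add: mult.commute mult.left_commute)
  qed
  also have "\<dots> = cnj (sesq M x y)" using c by (simp add: sesq_carrier)
  finally show ?thesis .
qed

lemma if_one_zero_simps[simp]: "(if P then 1 else 0) * (z::complex) = (if P then z else 0)"
   "z * (if P then 1 else 0) = (if P then z else 0)" "cnj (if P then 1 else 0) = (if P then 1 else 0)"
  by (cases P; simp)+

lemma sesq_unit_vectors: "M \<in> carrier_mat n n \<Longrightarrow> i < n \<Longrightarrow> j < n \<Longrightarrow>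
   sesq M (\<lambda>k. if k = i then 1 else 0) (\<lambda>k. if k = j then 1 else 0) = M $$ (i, j)"
  unfolding sesq_carrier by simp

lemma sesq_unit_vector_right: "M \<in> carrier_mat n n \<Longrightarrow> j < n \<Longrightarrow>
   sesq M x (\<lambda>k. if k = j then 1 else 0) = (\<Sum>i<n. cnj (x i) * M $$ (i, j))"
  unfolding sesq_carrier by simp

lemma nonneg_quadratic_imp_cauchy_schwarz:
  fixes a c :: real and b :: complex
  assumes "0 \<le> a" "0 \<le> c" and "\<And>l::complex. 0 \<le> a + 2 * Re (l * b) + (cmod l)\<^sup>2 * c"
  shows "(cmod b)\<^sup>2 \<le> a * c"
proof (cases "b = 0")
  case True
  show ?thesis using True assms by simp
next
  case False
  then have nb: "0 < (cmod b)\<^sup>2" by simp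
  have re: "Re (cnj b * b) = (cmod b)\<^sup>2" using cmod_power2[of b] by (simp add: power2_eq_square)
  show ?thesis
  proof (cases "c = 0")
    case True
    define t where "t = (a + 1) / (2 * (cmod b)\<^sup>2)"
    have "0 \<le> a + 2 * Re (complex_of_real (- t) * cnj b * b)"
      using assms(3)[of "complex_of_real (-t) * cnj b"] True by (simp add: mult.assoc)
    also have "Re (complex_of_real (- t) * cnj b * b) = - t * (cmod b)\<^sup>2"
      by (simp add: mult.assoc re[symmetric])
    finally have "0 \<le> a - 2 * t * (cmod b)\<^sup>2" by simp
    also have "2 * t * (cmod b)\<^sup>2 = a + 1" using nb by (simp add: t_def field_simps)
    finally show ?thesis by simp
  next
    case False
    have c0: "0 \<le> c" using assms by simp
    then have cp: "0 < c" using False by simp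
    define l where "l = - cnj b / complex_of_real c"
    have "0 \<le> a + 2 * Re (l * b) + (cmod l)\<^sup>2 * c" by (rule assms(3))
    also have "Re (l * b) = - (cmod b)\<^sup>2 / c"
      unfolding l_def using cp re by (simp add: Re_divide_of_real)
    also have "(cmod l)\<^sup>2 = (cmod b)\<^sup>2 / c\<^sup>2"
      unfolding l_def using cp by (simp add: norm_divide power_divide)
    finally have "0 \<le> a - (cmod b)\<^sup>2 / c" using cp by (simp add: power2_eq_square field_simps)
    then show ?thesis using cp by (simp add: field_simps)
  qed
qed

lemma sesq_combination_expand:
  assumes p: "psd_mat n M"
  shows "Re (sesq M (\<lambda>i. x i + l * y i) (\<lambda>i. x i + l * y i)) =
      Re (sesq M x x) + 2 * Re (l * sesq M x y) + (cmod l)\<^sup>2 * Re (sesq M y y)"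
proof -
  have c: "M \<in> carrier_mat n n" using p by (rule psd_mat_carrier)
  have yx: "sesq M y x = cnj (sesq M x y)" using sesq_hermitian_swap[OF c psd_mat_adjoint[OF p]] .
  have "sesq M (\<lambda>i. x i + l * y i) (\<lambda>i. x i + l * y i) =
      sesq M x x + l * sesq M x y + cnj l * (cnj (sesq M x y) + l * sesq M y y)"
    by (simp add: sesq_lin_left[OF c] sesq_lin_right[OF c] yx)
  also have "\<dots> = sesq M x x + (l * sesq M x y + cnj (l * sesq M x y)) + (cnj l * l) * sesq M y y"
    by (simp add: algebra_simps)
  also have "cnj l * l = complex_of_real ((cmod l)\<^sup>2)"
    using complex_norm_square[of l] by (simp add: mult.commute)
  finally show ?thesis by simp
qed

lemma psd_mat_cauchy_schwarz:
  assumes p: "psd_mat n M"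
  shows "(cmod (sesq M x y))\<^sup>2 \<le> Re (sesq M x x) * Re (sesq M y y)"
proof (rule nonneg_quadratic_imp_cauchy_schwarz)
  show "0 \<le> Re (sesq M x x)" "0 \<le> Re (sesq M y y)" using p by (auto intro: psd_mat_sesq_nonneg)
  show "0 \<le> Re (sesq M x x) + 2 * Re (l * sesq M x y) + (cmod l)\<^sup>2 * Re (sesq M y y)" for l
    using psd_mat_sesq_nonneg[OF p, of "\<lambda>i. x i + l * y i"] sesq_combination_expand[OF p] by simp
qed

lemma psd_mat_diag:
  assumes p: "psd_mat n M" and i: "i < n"
  shows "0 \<le> Re (M $$ (i, i))" "Im (M $$ (i, i)) = 0"
proof -
  have c: "M \<in> carrier_mat n n" using p by (rule psd_mat_carrier)
  show "0 \<le> Re (M $$ (i, i))"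
    using psd_mat_sesq_nonneg[OF p, of "\<lambda>k. if k = i then 1 else 0"] sesq_unit_vectors[OF c i i] by simp
  show "Im (M $$ (i, i)) = 0"
    using psd_mat_entry[OF p i i] by (metis cnj.simps(2) complex.expand neg_equal_zero)
qed

lemma psd_mat_trace_nonneg: "psd_mat n M \<Longrightarrow> 0 \<le> Re (mat_trace M)"
proof -
  assume p: "psd_mat n M"
  have "Re (mat_trace M) = (\<Sum>i<n. Re (M $$ (i, i)))"
    using psd_mat_carrier[OF p] by (simp add: mat_trace_def)
  also have "\<dots> \<ge> 0" using psd_mat_diag[OF p] by (intro sum_nonneg) auto
  finally show ?thesis .
qed

lemma psd_mat_zero_diag_imp_zero:
  assumes p: "psd_mat n M" and i: "i < n" and j: "j < n" and z: "M $$ (j, j) = 0"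
  shows "M $$ (i, j) = 0"
proof -
  have c: "M \<in> carrier_mat n n" using p by (rule psd_mat_carrier)
  have "(cmod (M $$ (i, j)))\<^sup>2 \<le> Re (M $$ (i, i)) * Re (M $$ (j, j))"
    using psd_mat_cauchy_schwarz[OF p, of "\<lambda>k. if k = i then 1 else 0" "\<lambda>k. if k = j then 1 else 0"]
    by (simp only: sesq_unit_vectors[OF c i i] sesq_unit_vectors[OF c i j] sesq_unit_vectors[OF c j j])
  then show ?thesis using z by simp
qed

text \<open>Subtracting the outer product of the rescaled m-th column keeps M psd, by Cauchy--Schwarz
  against the m-th unit vector; iterating over m gives a Cholesky-type factorization.\<close>

lemma psd_mat_minus_column_outer:
  assumes p: "psd_mat n M" and m: "m < n" and r: "0 < r" and Mm: "M $$ (m, m) = complex_of_real (r * r)"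
  defines "v \<equiv> \<lambda>i. M $$ (i, m) / complex_of_real r"
  shows "psd_mat n (M - mat n n (\<lambda>(i, j). v i * cnj (v j)))"
proof -
  define V where "V = mat n n (\<lambda>(i, j). v i * cnj (v j))"
  have c: "M \<in> carrier_mat n n" using p by (rule psd_mat_carrier)
  have cV: "V \<in> carrier_mat n n" by (simp add: V_def)
  have cN: "M - V \<in> carrier_mat n n" using c cV by (simp add: minus_carrier_mat)
  have "adjoint (M - V) = M - V"
  proof (rule eq_matI)
    fix i j assume "i < dim_row (M - V)" "j < dim_col (M - V)"
    then have ij: "i < n" "j < n" using cN by auto
    then show "adjoint (M - V) $$ (i, j) = (M - V) $$ (i, j)"
      using c psd_mat_entry[OF p ij] by (simp add: V_def)
  qed (use cN cV in simp_all)
  moreover have "0 \<le> Re (sesq (M - V) x x)" for x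
  proof -
    define w where "w = (\<Sum>i<n. cnj (x i) * v i)"
    let ?e = "\<lambda>k. if k = m then 1 else 0"
    have "sesq V x x = (\<Sum>i<n. \<Sum>j<n. (cnj (x i) * v i) * (cnj (v j) * x j))"
      unfolding sesq_carrier[OF cV] by (intro sum.cong refl) (simp add: V_def mult.assoc)
    also have "\<dots> = w * cnj w" unfolding w_def sum_product[symmetric]
      by (simp add: sum_conjugate[where 'a=complex, simplified] mult.commute)
    finally have sV: "sesq V x x = w * cnj w" .
    have w: "w = sesq M x ?e / complex_of_real r"
      unfolding w_def sesq_unit_vector_right[OF c m] v_def by (simp add: sum_divide_distrib)
    have cs: "(cmod (sesq M x ?e))\<^sup>2 \<le> Re (sesq M x x) * (r * r)"
      using psd_mat_cauchy_schwarz[OF p, of x ?e] sesq_unit_vectors[OF c m m] Mm by simp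
    have "Re (w * cnj w) = (cmod w)\<^sup>2" using cmod_power2[of w] by (simp add: power2_eq_square)
    also have "\<dots> = (cmod (sesq M x ?e))\<^sup>2 / (r * r)"
      using r by (simp add: w norm_divide power_divide power2_eq_square)
    also have "\<dots> \<le> Re (sesq M x x)" using cs r by (simp add: divide_le_eq)
    finally show ?thesis using sV sesq_minus[OF c cV] by simp
  qed
  ultimately show ?thesis using cN unfolding psd_mat_iff_sesq V_def by blast
qed

definition leading_block_supported :: "nat \<Rightarrow> nat \<Rightarrow> complex mat \<Rightarrow> bool" where
  "leading_block_supported n m M \<longleftrightarrow> (\<forall>i<n. \<forall>j<n. (m \<le> i \<or> m \<le> j) \<longrightarrow> M $$ (i, j) = 0)"

lemma psd_mat_zero_diag_leading_block:
  assumes p: "psd_mat n M" and m: "m < n" and supp: "leading_block_supported n (Suc m) M"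
    and z: "M $$ (m, m) = 0"
  shows "leading_block_supported n m M"
  unfolding leading_block_supported_def
proof (intro allI impI)
  have col: "M $$ (i, m) = 0" "M $$ (m, i) = 0" if "i < n" for i
    using psd_mat_zero_diag_imp_zero[OF p that m z] psd_mat_entry[OF p m that] by auto
  fix i j assume ij: "i < n" "j < n" "m \<le> i \<or> m \<le> j"
  show "M $$ (i, j) = 0"
  proof (cases "i = m \<or> j = m")
    case True
    then show ?thesis using col ij by auto
  next
    case False
    then show ?thesis using supp ij unfolding leading_block_supported_def by auto
  qed
qed

lemma psd_mat_peel_rank_one:
  assumes p: "psd_mat n M" and m: "m < n" and supp: "leading_block_supported n (Suc m) M"
  shows "\<exists>v N. psd_mat n N \<and> leading_block_supported n m N \<and>
    (\<forall>i<n. \<forall>j<n. M $$ (i, j) = N $$ (i, j) + v i * cnj (v j))"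
proof (cases "M $$ (m, m) = 0")
  case True
  then show ?thesis
    using psd_mat_zero_diag_leading_block[OF p m supp] p by (intro exI[of _ "\<lambda>_. 0"] exI[of _ M]) simp
next
  case False
  have "0 \<le> Re (M $$ (m, m))" "Im (M $$ (m, m)) = 0" using psd_mat_diag[OF p m] by auto
  then have rpos: "0 < Re (M $$ (m, m))" using False by (metis complex.expand order_le_less zero_complex.sel)
  define r where "r = sqrt (Re (M $$ (m, m)))"
  have r: "0 < r" using rpos by (simp add: r_def)
  have Mm: "M $$ (m, m) = complex_of_real (r * r)"
    using \<open>Im (M $$ (m, m)) = 0\<close> rpos by (simp add: r_def complex_eq_iff)
  define v where "v i = M $$ (i, m) / complex_of_real r" for i
  define N where "N = M - mat n n (\<lambda>(i, j). v i * cnj (v j))"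
  have c: "M \<in> carrier_mat n n" using p by (rule psd_mat_carrier)
  have Nij: "N $$ (i, j) = M $$ (i, j) - v i * cnj (v j)" if "i < n" "j < n" for i j
    using that c by (simp add: N_def)
  have "psd_mat n N" unfolding N_def v_def by (rule psd_mat_minus_column_outer[OF p m r Mm])
  moreover have "leading_block_supported n m N"
    unfolding leading_block_supported_def
  proof (intro allI impI)
    fix i j assume ij: "i < n" "j < n" "m \<le> i \<or> m \<le> j"
    have M0: "M $$ (k, l) = 0" if "k < n" "l < n" "Suc m \<le> k \<or> Suc m \<le> l" for k l
      using supp that unfolding leading_block_supported_def by blast
    have vz: "v k = 0" if "k < n" "Suc m \<le> k" for k
      using M0[of k m] that m by (simp add: v_def)
    consider "i = m" | "j = m" | "Suc m \<le> i" | "Suc m \<le> j" using ij by linarith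
    then show "N $$ (i, j) = 0"
    proof cases
      case 1
      then show ?thesis using Nij[OF ij(1,2)] r psd_mat_entry[OF p m ij(2)] by (simp add: v_def Mm)
    next
      case 2
      then show ?thesis using Nij[OF ij(1,2)] r by (simp add: v_def Mm)
    next
      case 3
      then show ?thesis using Nij[OF ij(1,2)] vz[OF ij(1)] M0[OF ij(1,2)] by simp
    next
      case 4
      then show ?thesis using Nij[OF ij(1,2)] vz[OF ij(2)] M0[OF ij(1,2)] by simp
    qed
  qed
  ultimately show ?thesis using Nij by (intro exI[of _ v] exI[of _ N]) simp
qed

lemma psd_mat_factor_leading_block:
  assumes "psd_mat n M" "m \<le> n" "leading_block_supported n m M"
  shows "\<exists>f. \<forall>i<n. \<forall>j<n. M $$ (i, j) = (\<Sum>k<m. f k i * cnj (f k j))"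
  using assms
proof (induction m arbitrary: M)
  case 0
  then show ?case by (simp add: leading_block_supported_def)
next
  case (Suc m)
  have m: "m < n" using Suc.prems(2) by simp
  obtain v N where N: "psd_mat n N" "leading_block_supported n m N"
    and MN: "\<forall>i<n. \<forall>j<n. M $$ (i, j) = N $$ (i, j) + v i * cnj (v j)"
    using psd_mat_peel_rank_one[OF Suc.prems(1) m Suc.prems(3)] by blast
  obtain f where f: "\<forall>i<n. \<forall>j<n. N $$ (i, j) = (\<Sum>k<m. f k i * cnj (f k j))"
    using Suc.IH[OF N(1) less_imp_le[OF m] N(2)] by blast
  have "\<forall>i<n. \<forall>j<n. M $$ (i, j) = (\<Sum>k<Suc m. (f(m := v)) k i * cnj ((f(m := v)) k j))"
    using f MN by simp
  then show ?case by blast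
qed

lemma psd_mat_factor:
  assumes p: "psd_mat n M"
  obtains Y where "Y \<in> carrier_mat n n" "M = Y * adjoint Y"
proof -
  obtain f where f: "\<forall>i<n. \<forall>j<n. M $$ (i, j) = (\<Sum>k<n. f k i * cnj (f k j))"
    using psd_mat_factor_leading_block[OF p order.refl] by (auto simp: leading_block_supported_def)
  define Y where "Y = mat n n (\<lambda>(i, k). f k i)"
  have cY: "Y \<in> carrier_mat n n" by (simp add: Y_def)
  have "M = Y * adjoint Y"
  proof (rule eq_matI)
    fix i j assume "i < dim_row (Y * adjoint Y)" "j < dim_col (Y * adjoint Y)"
    then have ij: "i < n" "j < n" using cY by auto
    show "M $$ (i, j) = (Y * adjoint Y) $$ (i, j)"
      using f ij cY by (subst mat_mult_index_sum[OF cY adjoint_carrier[OF cY] ij]) (simp add: Y_def)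
  qed (use cY psd_mat_carrier[OF p] in simp_all)
  then show ?thesis using that cY by blast
qed

lemma sesq_one: "sesq (1\<^sub>m n) x x = (\<Sum>i<n. cnj (x i) * x i)"
proof -
  have "sesq (1\<^sub>m n) x x = (\<Sum>i<n. \<Sum>j<n. if j = i then cnj (x i) * x i else 0)"
    unfolding sesq_carrier[OF one_carrier_mat] by (intro sum.cong refl) auto
  then show ?thesis by simp
qed

lemma Re_cnj_mult_self: "Re (cnj z * z) = (cmod z)\<^sup>2"
  using cmod_power2[of z] by (simp add: power2_eq_square)

lemma sesq_one_pos:
  assumes "i < n" "x i \<noteq> 0"
  shows "0 < Re (sesq (1\<^sub>m n) x x)"
proof -
  have "0 < Re (cnj (x i) * x i)" unfolding Re_cnj_mult_self using assms(2) by simp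
  also have "\<dots> \<le> (\<Sum>k<n. Re (cnj (x k) * x k))"
    using assms(1) by (intro member_le_sum) (auto simp: Re_cnj_mult_self)
  finally show ?thesis by (simp add: sesq_one)
qed

lemma psd_mat_add: assumes "psd_mat n A" "psd_mat n B" shows "psd_mat n (A + B)"
proof -
  have c: "A \<in> carrier_mat n n" "B \<in> carrier_mat n n" using assms by (auto intro: psd_mat_carrier)
  show ?thesis unfolding psd_mat_iff_sesq
    using c adjoint_add[OF c] psd_mat_adjoint[OF assms(1)] psd_mat_adjoint[OF assms(2)] sesq_add[OF c]
      psd_mat_sesq_nonneg[OF assms(1)] psd_mat_sesq_nonneg[OF assms(2)] by (simp add: add_nonneg_nonneg)
qed

lemma psd_mat_smult: assumes "psd_mat n A" "0 \<le> c" shows "psd_mat n (complex_of_real c \<cdot>\<^sub>m A)"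
proof -
  have c: "A \<in> carrier_mat n n" using assms by (auto intro: psd_mat_carrier)
  show ?thesis unfolding psd_mat_iff_sesq
    using c adjoint_smult psd_mat_adjoint[OF assms(1)] sesq_smult[OF c] psd_mat_sesq_nonneg[OF assms(1)] assms(2)
    by simp
qed

lemma psd_mat_one: "psd_mat n (1\<^sub>m n)"
  unfolding psd_mat_iff_sesq by (simp add: sesq_one Re_cnj_mult_self sum_nonneg)

lemma sum_swap_two_pairs:
  "(\<Sum>l<n. \<Sum>m<n. \<Sum>i<n. \<Sum>j<n. T i j l m) = (\<Sum>i<n. \<Sum>j<n. \<Sum>l<n. \<Sum>m<n. (T i j l m :: complex))"
proof -
  have s1: "(\<Sum>m<n. \<Sum>i<n. \<Sum>j<n. T i j l m) = (\<Sum>i<n. \<Sum>m<n. \<Sum>j<n. T i j l m)" for l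
    by (rule sum.swap)
  have s3: "(\<Sum>m<n. \<Sum>j<n. T i j l m) = (\<Sum>j<n. \<Sum>m<n. T i j l m)" for i l
    by (rule sum.swap)
  have s4: "(\<Sum>l<n. \<Sum>j<n. \<Sum>m<n. T i j l m) = (\<Sum>j<n. \<Sum>l<n. \<Sum>m<n. T i j l m)" for i
    by (rule sum.swap)
  have "(\<Sum>l<n. \<Sum>m<n. \<Sum>i<n. \<Sum>j<n. T i j l m) = (\<Sum>l<n. \<Sum>i<n. \<Sum>m<n. \<Sum>j<n. T i j l m)"
    by (simp only: s1)
  also have "\<dots> = (\<Sum>i<n. \<Sum>l<n. \<Sum>m<n. \<Sum>j<n. T i j l m)" by (rule sum.swap)
  also have "\<dots> = (\<Sum>i<n. \<Sum>l<n. \<Sum>j<n. \<Sum>m<n. T i j l m)"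
    by (simp only: s3)
  also have "\<dots> = (\<Sum>i<n. \<Sum>j<n. \<Sum>l<n. \<Sum>m<n. T i j l m)"
    by (simp only: s4)
  finally show ?thesis .
qed

lemma sesq_congruence:
  assumes cY: "Y \<in> carrier_mat n n" and cA: "A \<in> carrier_mat n n"
  shows "sesq (Y * A * adjoint Y) x x = sesq A (\<lambda>l. \<Sum>i<n. cnj (Y $$ (i, l)) * x i) (\<lambda>l. \<Sum>i<n. cnj (Y $$ (i, l)) * x i)"
proof -
  let ?T = "\<lambda>i j l m. cnj (x i) * Y $$ (i, l) * A $$ (l, m) * cnj (Y $$ (j, m)) * x j"
  have cYA: "Y * A \<in> carrier_mat n n" using cY cA by simp
  have cC: "Y * A * adjoint Y \<in> carrier_mat n n" using cYA cY by simp
  have ent: "(Y * A * adjoint Y) $$ (i, j) = (\<Sum>m<n. (\<Sum>l<n. Y $$ (i, l) * A $$ (l, m)) * cnj (Y $$ (j, m)))"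
    if "i < n" "j < n" for i j
    using that cY cA cYA by (simp add: mat_mult_index_sum[OF cYA adjoint_carrier[OF cY]] mat_mult_index_sum[OF cY cA] del: index_mult_mat(1))
  have "sesq (Y * A * adjoint Y) x x = (\<Sum>i<n. \<Sum>j<n. \<Sum>l<n. \<Sum>m<n. ?T i j l m)"
  proof -
    have "sesq (Y * A * adjoint Y) x x = (\<Sum>i<n. \<Sum>j<n. \<Sum>m<n. \<Sum>l<n. ?T i j l m)"
      unfolding sesq_carrier[OF cC]
      by (intro sum.cong refl) (simp add: ent sum_distrib_left sum_distrib_right mult.assoc)
    also have "\<dots> = (\<Sum>i<n. \<Sum>j<n. \<Sum>l<n. \<Sum>m<n. ?T i j l m)"
    proof -
      have e: "(\<Sum>m<n. \<Sum>l<n. ?T i j l m) = (\<Sum>l<n. \<Sum>m<n. ?T i j l m)" for i j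
        by (rule sum.swap)
      show ?thesis by (simp only: e)
    qed
    finally show ?thesis .
  qed
  also have "\<dots> = (\<Sum>l<n. \<Sum>m<n. \<Sum>i<n. \<Sum>j<n. ?T i j l m)" by (rule sum_swap_two_pairs[symmetric])
  also have "\<dots> = (\<Sum>l<n. \<Sum>m<n. cnj (\<Sum>i<n. cnj (Y $$ (i, l)) * x i) * A $$ (l, m) * (\<Sum>j<n. cnj (Y $$ (j, m)) * x j))"
  proof (rule sum.cong[OF refl], rule sum.cong[OF refl])
    fix l m
    show "(\<Sum>i<n. \<Sum>j<n. ?T i j l m) = cnj (\<Sum>i<n. cnj (Y $$ (i, l)) * x i) * A $$ (l, m) * (\<Sum>j<n. cnj (Y $$ (j, m)) * x j)"
      by (simp add: sum_conjugate[where 'a=complex, simplified] sum_distrib_left sum_distrib_right mult_ac)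
  qed
  also have "\<dots> = sesq A (\<lambda>l. \<Sum>i<n. cnj (Y $$ (i, l)) * x i) (\<lambda>l. \<Sum>i<n. cnj (Y $$ (i, l)) * x i)"
    unfolding sesq_carrier[OF cA] by simp
  finally show ?thesis .
qed

lemma psd_mat_congruence:
  assumes p: "psd_mat n A" and cY: "Y \<in> carrier_mat n n"
  shows "psd_mat n (Y * A * adjoint Y)"
proof -
  have cA: "A \<in> carrier_mat n n" using p by (rule psd_mat_carrier)
  have "adjoint (Y * A * adjoint Y) = adjoint (adjoint Y) * adjoint (Y * A)"
    using cY cA by (simp add: adjoint_mult[of _ n n _ n])
  also have "\<dots> = Y * (A * adjoint Y)" using cY cA psd_mat_adjoint[OF p] by (simp add: adjoint_mult[of _ n n _ n])
  also have "\<dots> = Y * A * adjoint Y" using cY cA by (simp add: assoc_mult_mat[of _ n n _ n _ n])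
  finally have h: "adjoint (Y * A * adjoint Y) = Y * A * adjoint Y" .
  have cYA: "Y * A \<in> carrier_mat n n" using cY cA by simp
  have cC: "Y * A * adjoint Y \<in> carrier_mat n n" using cYA cY by simp
  show ?thesis unfolding psd_mat_iff_sesq using h cC sesq_congruence[OF cY cA] psd_mat_sesq_nonneg[OF p] by simp
qed

lemma trace_psd_mat_mult_nonneg:
  assumes pA: "psd_mat n A" and pB: "psd_mat n B"
  shows "0 \<le> Re (mat_trace (A * B))"
proof -
  obtain Y where cY: "Y \<in> carrier_mat n n" and B: "B = Y * adjoint Y" using psd_mat_factor[OF pB] by blast
  have cA: "A \<in> carrier_mat n n" using pA by (rule psd_mat_carrier)
  have "mat_trace (A * B) = mat_trace ((A * Y) * adjoint Y)"
    unfolding B using assoc_mult_mat[OF cA cY adjoint_carrier[OF cY]] by simp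
  also have "\<dots> = mat_trace (adjoint Y * A * adjoint (adjoint Y))"
    using trace_mult_comm[of "A * Y" n n "adjoint Y"] assoc_mult_mat[of "adjoint Y" n n A n Y n] cA cY
    by simp
  finally show ?thesis
    using psd_mat_trace_nonneg[OF psd_mat_congruence[OF pA adjoint_carrier[OF cY]]] by simp
qed

section \<open>A gentle-measurement estimate\<close>

definition trace_form :: "complex mat \<Rightarrow> complex mat \<Rightarrow> complex mat \<Rightarrow> complex" where
  "trace_form \<rho> U V = mat_trace (U * \<rho> * adjoint V)"

lemma trace_form_sum_sesq:
  assumes c\<rho>: "\<rho> \<in> carrier_mat n n" and cU: "U \<in> carrier_mat n n" and cV: "V \<in> carrier_mat n n"
  shows "trace_form \<rho> U V = (\<Sum>i<n. sesq \<rho> (\<lambda>j. cnj (U $$ (i, j))) (\<lambda>j. cnj (V $$ (i, j))))"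
proof -
  have cUr: "U * \<rho> \<in> carrier_mat n n" using cU c\<rho> by simp
  have cC: "U * \<rho> * adjoint V \<in> carrier_mat n n" using cUr cV by simp
  have "trace_form \<rho> U V = (\<Sum>i<n. (U * \<rho> * adjoint V) $$ (i, i))"
    using cC cU by (simp add: trace_form_def mat_trace_def)
  also have "\<dots> = (\<Sum>i<n. \<Sum>k<n. (\<Sum>j<n. U $$ (i, j) * \<rho> $$ (j, k)) * cnj (V $$ (i, k)))"
    using cUr cV cU c\<rho>
    by (intro sum.cong refl) (simp add: mat_mult_index_sum[OF cUr adjoint_carrier[OF cV]] mat_mult_index_sum[OF cU c\<rho>] del: index_mult_mat(1))
  also have "\<dots> = (\<Sum>i<n. \<Sum>j<n. \<Sum>k<n. U $$ (i, j) * \<rho> $$ (j, k) * cnj (V $$ (i, k)))"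
  proof -
    have e: "(\<Sum>k<n. (\<Sum>j<n. U $$ (i, j) * \<rho> $$ (j, k)) * cnj (V $$ (i, k))) =
        (\<Sum>j<n. \<Sum>k<n. U $$ (i, j) * \<rho> $$ (j, k) * cnj (V $$ (i, k)))" for i
      unfolding sum_distrib_right by (rule sum.swap)
    show ?thesis by (simp only: e)
  qed
  also have "\<dots> = (\<Sum>i<n. sesq \<rho> (\<lambda>j. cnj (U $$ (i, j))) (\<lambda>j. cnj (V $$ (i, j))))"
    unfolding sesq_carrier[OF c\<rho>] by simp
  finally show ?thesis .
qed

lemma trace_form_add_left:
  assumes c: "\<rho> \<in> carrier_mat n n" "U1 \<in> carrier_mat n n" "U2 \<in> carrier_mat n n" "V \<in> carrier_mat n n"
  shows "trace_form \<rho> (U1 + U2) V = trace_form \<rho> U1 V + trace_form \<rho> U2 V"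
proof -
  have c1: "U1 * \<rho> \<in> carrier_mat n n" "U2 * \<rho> \<in> carrier_mat n n" using c by auto
  have "(U1 + U2) * \<rho> * adjoint V = U1 * \<rho> * adjoint V + U2 * \<rho> * adjoint V"
    using c c1 by (simp add: add_mult_distrib_mat[OF c(2) c(3) c(1)]
        add_mult_distrib_mat[OF c1(1) c1(2) adjoint_carrier[OF c(4)]])
  moreover have "U1 * \<rho> * adjoint V \<in> carrier_mat n n" "U2 * \<rho> * adjoint V \<in> carrier_mat n n" using c by auto
  ultimately show ?thesis unfolding trace_form_def by (simp add: trace_add)
qed

lemma trace_form_add_right:
  assumes c: "\<rho> \<in> carrier_mat n n" "U \<in> carrier_mat n n" "V1 \<in> carrier_mat n n" "V2 \<in> carrier_mat n n"
  shows "trace_form \<rho> U (V1 + V2) = trace_form \<rho> U V1 + trace_form \<rho> U V2"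
proof -
  have c1: "U * \<rho> \<in> carrier_mat n n" using c by auto
  have "U * \<rho> * adjoint (V1 + V2) = U * \<rho> * adjoint V1 + U * \<rho> * adjoint V2"
    using c c1 by (simp add: adjoint_add[OF c(3) c(4)]
        mult_add_distrib_mat[OF c1 adjoint_carrier[OF c(3)] adjoint_carrier[OF c(4)]])
  moreover have "U * \<rho> * adjoint V1 \<in> carrier_mat n n" "U * \<rho> * adjoint V2 \<in> carrier_mat n n" using c by auto
  ultimately show ?thesis unfolding trace_form_def by (simp add: trace_add)
qed

lemma trace_form_swap:
  assumes p: "psd_mat n \<rho>" and cU: "U \<in> carrier_mat n n" and cV: "V \<in> carrier_mat n n"
  shows "trace_form \<rho> V U = cnj (trace_form \<rho> U V)"
proof -
  have c\<rho>: "\<rho> \<in> carrier_mat n n" using p by (rule psd_mat_carrier)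
  have "adjoint (U * \<rho> * adjoint V) = adjoint (adjoint V) * adjoint (U * \<rho>)"
    using cU cV c\<rho> by (simp add: adjoint_mult[of _ n n _ n])
  also have "\<dots> = V * (\<rho> * adjoint U)"
    using cU cV c\<rho> psd_mat_adjoint[OF p] by (simp add: adjoint_mult[of _ n n _ n])
  also have "\<dots> = V * \<rho> * adjoint U" using assoc_mult_mat[OF cV c\<rho> adjoint_carrier[OF cU]] by simp
  finally have e: "adjoint (U * \<rho> * adjoint V) = V * \<rho> * adjoint U" .
  have "U * \<rho> * adjoint V \<in> carrier_mat n n" using cU cV c\<rho> by simp
  then show ?thesis unfolding trace_form_def
    using trace_adjoint[of "U * \<rho> * adjoint V" n] e by simp
qed

lemma trace_form_nonneg:
  assumes p: "psd_mat n \<rho>" and cU: "U \<in> carrier_mat n n"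
  shows "0 \<le> Re (trace_form \<rho> U U)"
  unfolding trace_form_def using psd_mat_trace_nonneg[OF psd_mat_congruence[OF p cU]] .

lemma trace_form_cauchy_schwarz:
  assumes p: "psd_mat n \<rho>" and cU: "U \<in> carrier_mat n n" and cV: "V \<in> carrier_mat n n"
  shows "(cmod (trace_form \<rho> U V))\<^sup>2 \<le> Re (trace_form \<rho> U U) * Re (trace_form \<rho> V V)"
proof (rule nonneg_quadratic_imp_cauchy_schwarz)
  have c\<rho>: "\<rho> \<in> carrier_mat n n" using p by (rule psd_mat_carrier)
  show "0 \<le> Re (trace_form \<rho> U U)" "0 \<le> Re (trace_form \<rho> V V)" using trace_form_nonneg[OF p] cU cV by auto
  fix l :: complex
  define x where "x i = (\<lambda>j. cnj (U $$ (i, j)))" for i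
  define y where "y i = (\<lambda>j. cnj (V $$ (i, j)))" for i
  have "0 \<le> (\<Sum>i<n. Re (sesq \<rho> (\<lambda>j. x i j + l * y i j) (\<lambda>j. x i j + l * y i j)))"
    using psd_mat_sesq_nonneg[OF p] by (intro sum_nonneg) auto
  also have "\<dots> = (\<Sum>i<n. Re (sesq \<rho> (x i) (x i)) + 2 * Re (l * sesq \<rho> (x i) (y i)) + (cmod l)\<^sup>2 * Re (sesq \<rho> (y i) (y i)))"
    by (intro sum.cong refl) (rule sesq_combination_expand[OF p])
  also have "\<dots> = Re (trace_form \<rho> U U) + 2 * Re (l * trace_form \<rho> U V) + (cmod l)\<^sup>2 * Re (trace_form \<rho> V V)"
    unfolding trace_form_sum_sesq[OF c\<rho> cU cU] trace_form_sum_sesq[OF c\<rho> cU cV] trace_form_sum_sesq[OF c\<rho> cV cV] x_def y_def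
    by (simp add: sum.distrib sum_distrib_left)
  finally show "0 \<le> Re (trace_form \<rho> U U) + 2 * Re (l * trace_form \<rho> U V) + (cmod l)\<^sup>2 * Re (trace_form \<rho> V V)" .
qed

lemma trace_form_add_le:
  assumes p: "psd_mat n \<rho>" and cU: "U \<in> carrier_mat n n" and cV: "V \<in> carrier_mat n n"
  shows "Re (trace_form \<rho> (U + V) (U + V)) \<le>
    Re (trace_form \<rho> U U) + Re (trace_form \<rho> V V) + 2 * sqrt (Re (trace_form \<rho> U U) * Re (trace_form \<rho> V V))"
proof -
  have c\<rho>: "\<rho> \<in> carrier_mat n n" using p by (rule psd_mat_carrier)
  define b where "b = trace_form \<rho> U V"
  have "trace_form \<rho> (U + V) (U + V) = trace_form \<rho> U U + b + cnj b + trace_form \<rho> V V"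
    unfolding b_def
    using trace_form_add_left[OF c\<rho> cU cV] trace_form_add_right[OF c\<rho> cU cU cV]
      trace_form_add_right[OF c\<rho> cV cU cV] trace_form_swap[OF p cU cV] cU cV by (simp add: add_carrier_mat)
  moreover have "cmod b \<le> sqrt (Re (trace_form \<rho> U U) * Re (trace_form \<rho> V V))"
    unfolding b_def using trace_form_cauchy_schwarz[OF p cU cV] by (simp add: real_le_rsqrt)
  ultimately show ?thesis using complex_Re_le_cmod[of b] by simp
qed

lemma trace_form_adjoint_factor:
  assumes c\<rho>: "\<rho> \<in> carrier_mat n n" and cZ: "Z \<in> carrier_mat n n" and cA: "A \<in> carrier_mat n n"
  shows "trace_form \<rho> (adjoint Z * A) (adjoint Z * A) = mat_trace (Z * adjoint Z * (A * \<rho> * adjoint A))"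
proof -
  have cZa: "adjoint Z \<in> carrier_mat n n" using cZ by simp
  have "trace_form \<rho> (adjoint Z * A) (adjoint Z * A) = mat_trace (adjoint Z * (A * \<rho> * adjoint A) * Z)"
    unfolding trace_form_def using cA cZ c\<rho>
    by (simp add: adjoint_mult[of _ n n _ n] assoc_mult_mat[of _ n n _ n _ n])
  also have "\<dots> = mat_trace (Z * (adjoint Z * (A * \<rho> * adjoint A)))"
    using trace_mult_comm[of "adjoint Z * (A * \<rho> * adjoint A)" n n Z] cA cZ c\<rho> by simp
  also have "\<dots> = mat_trace (Z * adjoint Z * (A * \<rho> * adjoint A))"
    using assoc_mult_mat[of Z n n "adjoint Z" n "A * \<rho> * adjoint A" n] cA cZ c\<rho> by simp
  finally show ?thesis .
qed

lemma trace_mult_smult: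
  assumes "A \<in> carrier_mat n n" "B \<in> carrier_mat n n"
  shows "mat_trace (A * (c \<cdot>\<^sub>m B)) = c * mat_trace (A * B)"
  using mult_smult_distrib[OF assms] trace_smult[of "A * B" n] assms by simp

lemma trace_povm_le:
  assumes pX: "psd_mat n X" and pIP: "psd_mat n (1\<^sub>m n - P)" and cP: "P \<in> carrier_mat n n"
  shows "Re (mat_trace (P * X)) \<le> Re (mat_trace X)"
proof -
  have cX: "X \<in> carrier_mat n n" using pX by (rule psd_mat_carrier)
  have "0 \<le> Re (mat_trace ((1\<^sub>m n - P) * X))" by (rule trace_psd_mat_mult_nonneg[OF pIP pX])
  also have "(1\<^sub>m n - P) * X = X - P * X"
    using minus_mult_distrib_mat[OF one_carrier_mat cP cX] cX by simp
  also have "mat_trace (X - P * X) = mat_trace X - mat_trace (P * X)"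
    using cX cP by (intro trace_minus) auto
  finally show ?thesis by simp
qed

lemma trace_psd_mat_mult_mono:
  assumes pP: "psd_mat n P" and cA: "A \<in> carrier_mat n n" and cB: "B \<in> carrier_mat n n"
    and pBA: "psd_mat n (B - A)"
  shows "Re (mat_trace (P * A)) \<le> Re (mat_trace (P * B))"
proof -
  have cP: "P \<in> carrier_mat n n" using pP by (rule psd_mat_carrier)
  have "0 \<le> Re (mat_trace (P * (B - A)))" by (rule trace_psd_mat_mult_nonneg[OF pP pBA])
  also have "mat_trace (P * (B - A)) = mat_trace (P * B) - mat_trace (P * A)"
    using mult_minus_distrib_mat[OF cP cB cA] cP cA cB by (simp add: trace_minus[of _ n])
  finally show ?thesis by simp
qed

lemma psd_mat_congruence_diff:
  assumes pBA: "psd_mat n (B - A)" and cA: "A \<in> carrier_mat n n" and cB: "B \<in> carrier_mat n n"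
    and cY: "Y \<in> carrier_mat n n"
  shows "psd_mat n (Y * B * adjoint Y - Y * A * adjoint Y)"
proof -
  have "Y * (B - A) * adjoint Y = Y * B * adjoint Y - Y * A * adjoint Y"
    using mult_minus_distrib_mat[OF cY cB cA] minus_mult_distrib_mat[of "Y * B" n n "Y * A" "adjoint Y" n]
      cA cB cY by simp
  then show ?thesis using psd_mat_congruence[OF pBA cY] by simp
qed

text \<open>Write the test as P = Z Z^*. Splitting Z^* = Z^* R + Z^* (1 - R) inside the positive form
  (U, V) \<mapsto> tr (U \<rho> V^*), the cross term is controlled by Cauchy--Schwarz.\<close>

lemma trace_povm_le_sandwich:
  assumes p\<rho>: "psd_mat n \<rho>" and P: "povm_elem n P"
    and cR: "R \<in> carrier_mat n n" and hR: "adjoint R = R"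
    and RR: "Re (mat_trace (R * \<rho> * R)) \<le> 1"
    and SS: "Re (mat_trace ((1\<^sub>m n - R) * \<rho> * (1\<^sub>m n - R))) \<le> \<eta>"
  shows "Re (mat_trace (P * \<rho>)) \<le> Re (mat_trace (P * (R * \<rho> * R))) + \<eta> + 2 * sqrt \<eta>"
proof -
  have pP: "psd_mat n P" and pIP: "psd_mat n (1\<^sub>m n - P)" using P by (auto simp: povm_elem_def)
  have c\<rho>: "\<rho> \<in> carrier_mat n n" using p\<rho> by (rule psd_mat_carrier)
  have cP: "P \<in> carrier_mat n n" using pP by (rule psd_mat_carrier)
  obtain Z where cZ: "Z \<in> carrier_mat n n" and PZ: "P = Z * adjoint Z" using psd_mat_factor[OF pP] by blast
  define S where "S = 1\<^sub>m n - R"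
  have cS: "S \<in> carrier_mat n n" unfolding S_def using cR by (simp add: minus_carrier_mat)
  have hS: "adjoint S = S" unfolding S_def using adjoint_minus[OF one_carrier_mat cR] hR by simp
  have split: "adjoint Z = adjoint Z * R + adjoint Z * S"
    unfolding S_def using mult_minus_distrib_mat[of "adjoint Z" n n "1\<^sub>m n" n R] cZ cR
    by (intro eq_matI) auto
  define a where "a = Re (trace_form \<rho> (adjoint Z * R) (adjoint Z * R))"
  define c where "c = Re (trace_form \<rho> (adjoint Z * S) (adjoint Z * S))"
  have a: "a = Re (mat_trace (P * (R * \<rho> * R)))"
    unfolding a_def PZ using trace_form_adjoint_factor[OF c\<rho> cZ cR] hR by simp
  have c: "c = Re (mat_trace (P * (S * \<rho> * S)))"
    unfolding c_def PZ using trace_form_adjoint_factor[OF c\<rho> cZ cS] hS by simp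
  have a0: "0 \<le> a" and c0: "0 \<le> c"
    unfolding a_def c_def using cZ cR cS by (auto intro: trace_form_nonneg[OF p\<rho>])
  have a1: "a \<le> 1"
    unfolding a using trace_povm_le[OF psd_mat_congruence[OF p\<rho> cR] pIP cP] hR RR by simp
  have c1: "c \<le> \<eta>"
    unfolding c using trace_povm_le[OF psd_mat_congruence[OF p\<rho> cS] pIP cP] hS SS by (simp add: S_def)
  have "Re (mat_trace (P * \<rho>)) = Re (trace_form \<rho> (adjoint Z) (adjoint Z))"
    unfolding PZ using trace_form_adjoint_factor[OF c\<rho> cZ one_carrier_mat] cZ c\<rho> by simp
  also have "\<dots> \<le> a + c + 2 * sqrt (a * c)"
    unfolding a_def c_def using trace_form_add_le[OF p\<rho>, of "adjoint Z * R" "adjoint Z * S"] cZ cR cS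
    by (simp only: split[symmetric] adjoint_carrier mult_carrier_mat_square)
  also have "sqrt (a * c) \<le> sqrt \<eta>"
    using a0 a1 c0 c1 by (intro real_sqrt_le_mono) (metis mult_le_one mult_left_le order_trans mult.commute mult_right_mono)
  finally show ?thesis using a c1 by linarith
qed

text \<open>In the application R is a smoothed support projection of one marginal, G dominates \<rho>
  up to the factor d, and K is the product of the marginals. The choice of \<delta> leaves at least 2t/9
  of the weight t.\<close>

lemma trace_povm_lower_bound:
  fixes d t :: real
  assumes \<rho>: "density_mat n \<rho>" and P: "povm_elem n P"
    and t: "t = Re (mat_trace (P * \<rho>))" "0 < t"
    and d: "0 < d" and cG: "G \<in> carrier_mat n n" and G: "psd_mat n (complex_of_real d \<cdot>\<^sub>m G - \<rho>)"
    and cR: "R \<in> carrier_mat n n" and hR: "adjoint R = R"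
    and RR: "Re (mat_trace (R * \<rho> * R)) \<le> 1"
    and SS: "Re (mat_trace ((1\<^sub>m n - R) * \<rho> * (1\<^sub>m n - R))) \<le> (t / 3)\<^sup>2"
    and cK: "K \<in> carrier_mat n n" and K: "psd_mat n (K - complex_of_real (4 * t\<^sup>2 / (9 * d)) \<cdot>\<^sub>m (R * G * R))"
  shows "8 * t ^ 3 / (81 * d\<^sup>2) \<le> Re (mat_trace (P * K))"
proof -
  define \<delta> where "\<delta> = 4 * t\<^sup>2 / (9 * d)"
  have p\<rho>: "psd_mat n \<rho>" and tr: "mat_trace \<rho> = 1" using \<rho> by (auto simp: density_mat_def)
  have pP: "psd_mat n P" and pIP: "psd_mat n (1\<^sub>m n - P)" using P by (auto simp: povm_elem_def)
  have c\<rho>: "\<rho> \<in> carrier_mat n n" using p\<rho> by (rule psd_mat_carrier)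
  have t1: "t \<le> 1" using trace_povm_le[OF p\<rho> pIP psd_mat_carrier[OF pP]] t(1) tr by simp
  have "t \<le> Re (mat_trace (P * (R * \<rho> * R))) + (t / 3)\<^sup>2 + 2 * (t / 3)"
    using trace_povm_le_sandwich[OF p\<rho> P cR hR RR SS] t by simp
  moreover have "Re (mat_trace (P * (R * \<rho> * R))) \<le> d * Re (mat_trace (P * (R * G * R)))"
  proof -
    have "psd_mat n (R * (complex_of_real d \<cdot>\<^sub>m G) * adjoint R - R * \<rho> * adjoint R)"
      using psd_mat_congruence_diff[OF G c\<rho> _ cR] cG by simp
    moreover have "R * (complex_of_real d \<cdot>\<^sub>m G) * adjoint R = complex_of_real d \<cdot>\<^sub>m (R * G * R)"
      using hR cR cG by (simp add: mult_smult_distrib[of R n n G n] mult_smult_assoc_mat[of "R * G" n n R n])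
    ultimately have "Re (mat_trace (P * (R * \<rho> * R))) \<le> Re (mat_trace (P * (complex_of_real d \<cdot>\<^sub>m (R * G * R))))"
      using trace_psd_mat_mult_mono[OF pP] hR cR cG c\<rho> by simp
    also have "\<dots> = d * Re (mat_trace (P * (R * G * R)))"
      using trace_mult_smult[OF psd_mat_carrier[OF pP], of "R * G * R"] cR cG by simp
    finally show ?thesis .
  qed
  moreover have "(t / 3)\<^sup>2 = t * t / 9" by (simp add: power2_eq_square)
  moreover have "t * t \<le> t" by (rule mult_left_le[OF t1]) (use t(2) in simp)
  ultimately have "2 * t / 9 \<le> d * Re (mat_trace (P * (R * G * R)))" by linarith
  then have "\<delta> / d * (2 * t / 9) \<le> \<delta> * Re (mat_trace (P * (R * G * R)))"
    using d t(2) unfolding \<delta>_def by (simp add: field_simps)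
  also have "\<delta> * Re (mat_trace (P * (R * G * R))) \<le> Re (mat_trace (P * K))"
  proof -
    have "Re (mat_trace (P * (complex_of_real \<delta> \<cdot>\<^sub>m (R * G * R)))) \<le> Re (mat_trace (P * K))"
      using trace_psd_mat_mult_mono[OF pP _ cK] K cR cG unfolding \<delta>_def by simp
    then show ?thesis
      using trace_mult_smult[OF psd_mat_carrier[OF pP], of "R * G * R"] cR cG by simp
  qed
  finally show ?thesis
    using d unfolding \<delta>_def by (simp add: power2_eq_square power3_eq_cube field_simps)
qed

section \<open>Regularized support projections\<close>

lemma psd_mat_shift_invertible:
  fixes \<delta> :: real
  assumes p: "psd_mat m \<sigma>" and d: "0 < \<delta>"
  obtains M where "M \<in> carrier_mat m m" "M * (\<sigma> + complex_of_real \<delta> \<cdot>\<^sub>m 1\<^sub>m m) = 1\<^sub>m m"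
    "(\<sigma> + complex_of_real \<delta> \<cdot>\<^sub>m 1\<^sub>m m) * M = 1\<^sub>m m"
proof -
  define A where "A = \<sigma> + complex_of_real \<delta> \<cdot>\<^sub>m 1\<^sub>m m"
  have c\<sigma>: "\<sigma> \<in> carrier_mat m m" using p by (rule psd_mat_carrier)
  have cA: "A \<in> carrier_mat m m" unfolding A_def using c\<sigma> by simp
  have "det A \<noteq> 0"
  proof
    assume "det A = 0"
    then obtain v where v: "v \<in> carrier_vec m" "v \<noteq> 0\<^sub>v m" "A *\<^sub>v v = 0\<^sub>v m"
      using det_0_iff_vec_prod_zero_field[OF cA] by blast
    define x where "x i = v $ i" for i
    have "v = vec m x" using v(1) unfolding x_def by auto
    then have z: "sesq A x x = 0" using sesq_vec[OF cA, of x] v(3) by simp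
    obtain i where i: "i < m" "x i \<noteq> 0"
    proof (rule ccontr)
      assume "\<not> thesis"
      then have "v = 0\<^sub>v m" using that v(1) unfolding x_def by (intro eq_vecI) auto
      then show False using v(2) by simp
    qed
    have "sesq A x x = sesq \<sigma> x x + complex_of_real \<delta> * sesq (1\<^sub>m m) x x"
      unfolding A_def using c\<sigma> by (simp add: sesq_add sesq_smult[OF one_carrier_mat])
    then have "Re (sesq A x x) = Re (sesq \<sigma> x x) + \<delta> * Re (sesq (1\<^sub>m m) x x)" by simp
    moreover have "0 < \<delta> * Re (sesq (1\<^sub>m m) x x)" using sesq_one_pos[of i m x, OF i] d by simp
    ultimately show False using z psd_mat_sesq_nonneg[OF p, of x] by simp
  qed
  from det_non_zero_imp_unit[OF cA this, of "()"]
  obtain B where "B \<in> carrier_mat m m" "B * A = 1\<^sub>m m" "A * B = 1\<^sub>m m"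
    unfolding Units_def ring_mat_def by auto
  then show ?thesis using that unfolding A_def by blast
qed

lemma psd_mat_regularized_inverse:
  fixes \<delta> :: real
  assumes p: "psd_mat m \<sigma>" and d: "0 < \<delta>"
  obtains M where "M \<in> carrier_mat m m" "adjoint M = M"
    "M * \<sigma> = 1\<^sub>m m - complex_of_real \<delta> \<cdot>\<^sub>m M" "\<sigma> * M = 1\<^sub>m m - complex_of_real \<delta> \<cdot>\<^sub>m M"
proof -
  define dc where "dc = complex_of_real \<delta>"
  have c\<sigma>: "\<sigma> \<in> carrier_mat m m" using p by (rule psd_mat_carrier)
  obtain M where cM: "M \<in> carrier_mat m m" and hMA: "M * (\<sigma> + dc \<cdot>\<^sub>m 1\<^sub>m m) = 1\<^sub>m m"
    and hAM: "(\<sigma> + dc \<cdot>\<^sub>m 1\<^sub>m m) * M = 1\<^sub>m m"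
    using psd_mat_shift_invertible[OF p d] unfolding dc_def by blast
  note N = assoc_mult_mat[of _ m m _ m _ m]
    add_mult_distrib_mat[where nr=m and n=m and nc=m] mult_add_distrib_mat[where nr=m and n=m and nc=m]
    mult_smult_distrib[where nr=m and n=m and nc=m] mult_smult_assoc_mat[where nr=m and n=m and nc=m]
  have e1: "M * \<sigma> + dc \<cdot>\<^sub>m M = 1\<^sub>m m"
    using hMA cM c\<sigma> by (simp add: N)
  have h1: "M * \<sigma> = 1\<^sub>m m - dc \<cdot>\<^sub>m M"
  proof (rule eq_matI)
    fix i j assume ij: "i < dim_row (1\<^sub>m m - dc \<cdot>\<^sub>m M)" "j < dim_col (1\<^sub>m m - dc \<cdot>\<^sub>m M)"
    then have ij': "i < m" "j < m" using cM by auto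
    have "(M * \<sigma> + dc \<cdot>\<^sub>m M) $$ (i, j) = 1\<^sub>m m $$ (i, j)" using e1 by simp
    then show "(M * \<sigma>) $$ (i, j) = (1\<^sub>m m - dc \<cdot>\<^sub>m M) $$ (i, j)"
      using ij' cM c\<sigma> by (simp del: index_mult_mat(1) add: algebra_simps)
  qed (use cM c\<sigma> in simp_all)
  have e2: "\<sigma> * M + dc \<cdot>\<^sub>m M = 1\<^sub>m m"
    using hAM cM c\<sigma> by (simp add: N)
  have h2: "\<sigma> * M = 1\<^sub>m m - dc \<cdot>\<^sub>m M"
  proof (rule eq_matI)
    fix i j assume ij: "i < dim_row (1\<^sub>m m - dc \<cdot>\<^sub>m M)" "j < dim_col (1\<^sub>m m - dc \<cdot>\<^sub>m M)"
    then have ij': "i < m" "j < m" using cM by auto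
    have "(\<sigma> * M + dc \<cdot>\<^sub>m M) $$ (i, j) = 1\<^sub>m m $$ (i, j)" using e2 by simp
    then show "(\<sigma> * M) $$ (i, j) = (1\<^sub>m m - dc \<cdot>\<^sub>m M) $$ (i, j)"
      using ij' cM c\<sigma> by (simp del: index_mult_mat(1) add: algebra_simps)
  qed (use cM c\<sigma> in simp_all)
  have adjA: "adjoint (\<sigma> + dc \<cdot>\<^sub>m 1\<^sub>m m) = \<sigma> + dc \<cdot>\<^sub>m 1\<^sub>m m"
    using adjoint_add[OF c\<sigma>, of "dc \<cdot>\<^sub>m 1\<^sub>m m"] psd_mat_adjoint[OF p] by (simp add: adjoint_smult dc_def)
  have "adjoint M * (\<sigma> + dc \<cdot>\<^sub>m 1\<^sub>m m) = 1\<^sub>m m"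
    using adjoint_mult[of "\<sigma> + dc \<cdot>\<^sub>m 1\<^sub>m m" m m M m] c\<sigma> cM hAM adjA by simp
  then have "adjoint M = M"
    using assoc_mult_mat[of "adjoint M" m m "\<sigma> + dc \<cdot>\<^sub>m 1\<^sub>m m" m M m] hAM cM c\<sigma> by simp
  then show ?thesis using that cM h1 h2 unfolding dc_def by blast
qed

text \<open>With M = (\<sigma> + \<delta>)^-1 the matrix Q = 1 - \<delta> M = \<sigma> (\<sigma> + \<delta>)^-1 is a smoothed support projection
  of \<sigma>. Each claim below is an exact identity of polynomials in the commuting matrices \<sigma> and M,
  whose right-hand side is visibly psd.\<close>

lemma regularized_ratio_psd:
  fixes \<delta> :: real
  assumes p: "psd_mat m \<sigma>" and d: "0 < \<delta>"
    and cM: "M \<in> carrier_mat m m" and hM: "adjoint M = M"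
    and h1: "M * \<sigma> = 1\<^sub>m m - complex_of_real \<delta> \<cdot>\<^sub>m M" and h2: "\<sigma> * M = 1\<^sub>m m - complex_of_real \<delta> \<cdot>\<^sub>m M"
  defines "Q \<equiv> 1\<^sub>m m - complex_of_real \<delta> \<cdot>\<^sub>m M"
  shows "psd_mat m (\<sigma> - complex_of_real \<delta> \<cdot>\<^sub>m (Q * Q))"
    and "psd_mat m (1\<^sub>m m - Q * Q)"
    and "psd_mat m (complex_of_real (\<delta> / 4) \<cdot>\<^sub>m 1\<^sub>m m - (1\<^sub>m m - Q) * \<sigma> * (1\<^sub>m m - Q))"
proof -
  define dc where "dc = complex_of_real \<delta>"
  have c\<sigma>: "\<sigma> \<in> carrier_mat m m" using p by (rule psd_mat_carrier)
  note N = assoc_mult_mat[of _ m m _ m _ m]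
    add_mult_distrib_mat[where nr=m and n=m and nc=m] mult_add_distrib_mat[where nr=m and n=m and nc=m]
    minus_mult_distrib_mat[where nr=m and n=m and nc=m] mult_minus_distrib_mat[where nr=m and n=m and nc=m]
    mult_smult_distrib[where nr=m and n=m and nc=m] mult_smult_assoc_mat[where nr=m and n=m and nc=m]
  have h1': "M * (\<sigma> * X) = X - dc \<cdot>\<^sub>m (M * X)" if "X \<in> carrier_mat m m" for X
    using that c\<sigma> cM h1 by (simp add: N assoc_mult_mat[OF cM c\<sigma> that, symmetric] dc_def)
  have h2': "\<sigma> * (M * X) = X - dc \<cdot>\<^sub>m (M * X)" if "X \<in> carrier_mat m m" for X
    using that c\<sigma> cM h2 by (simp add: N assoc_mult_mat[OF c\<sigma> cM that, symmetric] dc_def)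
  have h1: "M * \<sigma> = 1\<^sub>m m - dc \<cdot>\<^sub>m M" and h2: "\<sigma> * M = 1\<^sub>m m - dc \<cdot>\<^sub>m M"
    using h1 h2 by (simp_all add: dc_def)
  have cdc: "cnj dc = dc" by (simp add: dc_def)
  have cQ: "Q \<in> carrier_mat m m" unfolding Q_def using cM by (simp add: minus_carrier_mat)
  have hQ: "adjoint Q = Q" unfolding Q_def using adjoint_minus[OF one_carrier_mat, of "dc \<cdot>\<^sub>m M"] cM
    by (simp add: adjoint_smult cdc hM dc_def)
  have "\<sigma> - dc \<cdot>\<^sub>m (Q * Q) = Q * \<sigma> * Q + dc \<cdot>\<^sub>m (Q * 1\<^sub>m m * Q) + (dc * dc) \<cdot>\<^sub>m (M * \<sigma> * M)"
    unfolding Q_def dc_def[symmetric] using cM c\<sigma> h1 h2 h1' h2'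
    apply (simp add: N minus_carrier_mat)
    apply (rule eq_matI)
     apply (simp_all del: index_mult_mat(1) add: algebra_simps)
    done
  moreover have "psd_mat m (Q * \<sigma> * adjoint Q + complex_of_real \<delta> \<cdot>\<^sub>m (Q * 1\<^sub>m m * adjoint Q) +
      complex_of_real (\<delta> * \<delta>) \<cdot>\<^sub>m (M * \<sigma> * adjoint M))"
    using d by (intro psd_mat_add psd_mat_smult psd_mat_congruence p psd_mat_one cQ cM) auto
  ultimately show "psd_mat m (\<sigma> - complex_of_real \<delta> \<cdot>\<^sub>m (Q * Q))"
    using hQ hM by (simp add: dc_def)
  have "1\<^sub>m m - Q * Q = (2 * dc) \<cdot>\<^sub>m (M * \<sigma> * M) + (dc * dc) \<cdot>\<^sub>m (M * 1\<^sub>m m * M)"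
    unfolding Q_def dc_def[symmetric] using cM c\<sigma> h1 h2 h1' h2'
    apply (simp add: N minus_carrier_mat)
    apply (rule eq_matI)
     apply (simp_all del: index_mult_mat(1) add: algebra_simps)
    done
  moreover have "psd_mat m (complex_of_real (2 * \<delta>) \<cdot>\<^sub>m (M * \<sigma> * adjoint M) +
      complex_of_real (\<delta> * \<delta>) \<cdot>\<^sub>m (M * 1\<^sub>m m * adjoint M))"
    using d by (intro psd_mat_add psd_mat_smult psd_mat_congruence p psd_mat_one cM) auto
  ultimately show "psd_mat m (1\<^sub>m m - Q * Q)" using hM by (simp add: dc_def)
  define W where "W = 1\<^sub>m m - (2 * dc) \<cdot>\<^sub>m M"
  have cW: "W \<in> carrier_mat m m" unfolding W_def using cM by (simp add: minus_carrier_mat)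
  have hW: "adjoint W = W" unfolding W_def using adjoint_minus[OF one_carrier_mat, of "(2 * dc) \<cdot>\<^sub>m M"] cM
    by (simp add: adjoint_smult cdc hM)
  have "complex_of_real (\<delta> / 4) \<cdot>\<^sub>m 1\<^sub>m m - (1\<^sub>m m - Q) * \<sigma> * (1\<^sub>m m - Q) =
      complex_of_real (\<delta> / 4) \<cdot>\<^sub>m (W * 1\<^sub>m m * W)"
    unfolding Q_def W_def dc_def[symmetric] using cM c\<sigma> h1 h2 h1' h2'
    apply (simp add: N minus_carrier_mat)
    apply (rule eq_matI)
     apply (simp_all del: index_mult_mat(1) add: algebra_simps dc_def)
    done
  moreover have "psd_mat m (complex_of_real (\<delta> / 4) \<cdot>\<^sub>m (W * 1\<^sub>m m * adjoint W))"
    using d by (intro psd_mat_smult psd_mat_congruence psd_mat_one cW) auto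
  ultimately show "psd_mat m (complex_of_real (\<delta> / 4) \<cdot>\<^sub>m 1\<^sub>m m - (1\<^sub>m m - Q) * \<sigma> * (1\<^sub>m m - Q))"
    using hW by simp
qed

lemma exists_regularized_ratio:
  fixes \<delta> :: real
  assumes p: "psd_mat m \<sigma>" and d: "0 < \<delta>"
  shows "\<exists>Q \<in> carrier_mat m m. adjoint Q = Q \<and> psd_mat m (\<sigma> - complex_of_real \<delta> \<cdot>\<^sub>m (Q * Q)) \<and>
     Re (mat_trace (\<sigma> * (Q * Q))) \<le> Re (mat_trace \<sigma>) \<and>
     Re (mat_trace (\<sigma> * ((1\<^sub>m m - Q) * (1\<^sub>m m - Q)))) \<le> real m * \<delta> / 4"
proof -
  have c\<sigma>: "\<sigma> \<in> carrier_mat m m" using p by (rule psd_mat_carrier)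
  obtain M where cM: "M \<in> carrier_mat m m" and hM: "adjoint M = M"
    and h1: "M * \<sigma> = 1\<^sub>m m - complex_of_real \<delta> \<cdot>\<^sub>m M" and h2: "\<sigma> * M = 1\<^sub>m m - complex_of_real \<delta> \<cdot>\<^sub>m M"
    using psd_mat_regularized_inverse[OF p d] by blast
  define Q where "Q = 1\<^sub>m m - complex_of_real \<delta> \<cdot>\<^sub>m M"
  note Qpsd = regularized_ratio_psd[OF p d cM hM h1 h2, folded Q_def]
  have cQ: "Q \<in> carrier_mat m m" unfolding Q_def using cM by (simp add: minus_carrier_mat)
  have hQ: "adjoint Q = Q" unfolding Q_def using adjoint_minus[OF one_carrier_mat, of "complex_of_real \<delta> \<cdot>\<^sub>m M"] cM
    by (simp add: adjoint_smult hM)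
  have cX: "1\<^sub>m m - Q \<in> carrier_mat m m" using cQ by (simp add: minus_carrier_mat)
  have "Re (mat_trace (\<sigma> * (Q * Q))) \<le> Re (mat_trace (\<sigma> * 1\<^sub>m m))"
    using trace_psd_mat_mult_mono[OF p _ one_carrier_mat Qpsd(2)] cQ by simp
  moreover have "Re (mat_trace ((1\<^sub>m m - Q) * \<sigma> * (1\<^sub>m m - Q))) \<le> real m * \<delta> / 4"
    using psd_mat_trace_nonneg[OF Qpsd(3)] cX c\<sigma>
    by (simp add: trace_minus[of _ m] trace_smult[of _ m] trace_one mult.commute)
  ultimately show ?thesis
    using cQ hQ Qpsd(1) c\<sigma> trace_sandwich[OF cX c\<sigma>] by auto
qed

section \<open>Kronecker products and marginals\<close>

lemma sum_lessThan_mult: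
  fixes a d :: nat
  shows "(\<Sum>k<a * d. f k) = (\<Sum>i<a. \<Sum>j<d. f (i * d + j))"
proof (induction a)
  case 0 then show ?case by simp
next
  case (Suc a)
  have "(\<Sum>k<Suc a * d. f k) = (\<Sum>k<a * d. f k) + (\<Sum>k = a * d..<a * d + d. f k)"
    by (simp add: lessThan_atLeast0 sum.atLeastLessThan_concat add.commute)
  also have "(\<Sum>k = a * d..<a * d + d. f k) = (\<Sum>j<d. f (a * d + j))"
  proof -
    have "(\<Sum>k = a * d..<a * d + d. f k) = (\<Sum>k = 0 + a * d..<d + a * d. f k)" by (simp add: add.commute)
    also have "\<dots> = (\<Sum>j = 0..<d. f (j + a * d))" by (rule sum.shift_bounds_nat_ivl)
    finally show ?thesis by (simp add: lessThan_atLeast0 add.commute)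
  qed
  finally show ?case using Suc by simp
qed

lemma mult_add_div_eq: "b < d \<Longrightarrow> (a * d + b) div d = (a::nat)" by simp
lemma mult_add_mod_eq: "b < d \<Longrightarrow> (a * d + b) mod d = (b::nat)" by simp

lemma kron_carrier[simp]: "kron dA dB X Y \<in> carrier_mat (dA * dB) (dA * dB)"
  by (simp add: kron_def)

lemma kron_dims[simp]: "dim_row (kron dA dB X Y) = dA * dB" "dim_col (kron dA dB X Y) = dA * dB"
  by (simp_all add: kron_def)

lemma kron_index: "i < dA * dB \<Longrightarrow> j < dA * dB \<Longrightarrow>
   kron dA dB X Y $$ (i, j) = X $$ (i div dB, j div dB) * Y $$ (i mod dB, j mod dB)"
  by (simp add: kron_def)

lemma mult_add_less_mult: fixes a b dA dB :: nat assumes "a < dA" "b < dB" shows "a * dB + b < dA * dB"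
proof -
  have "a * dB + b < a * dB + dB" using assms by simp
  also have "\<dots> = Suc a * dB" by simp
  also have "\<dots> \<le> dA * dB" using assms by (intro mult_le_mono1) simp
  finally show ?thesis .
qed

lemma kron_index_blocks: "a < dA \<Longrightarrow> b < dB \<Longrightarrow> a' < dA \<Longrightarrow> b' < dB \<Longrightarrow>
   kron dA dB X Y $$ (a * dB + b, a' * dB + b') = X $$ (a, a') * Y $$ (b, b')"
  by (simp add: kron_index mult_add_less_mult)

lemma kron_mult:
  assumes X: "X \<in> carrier_mat dA dA" and Z: "Z \<in> carrier_mat dA dA"
    and Y: "Y \<in> carrier_mat dB dB" and W: "W \<in> carrier_mat dB dB"
  shows "kron dA dB X Y * kron dA dB Z W = kron dA dB (X * Z) (Y * W)"
proof (rule eq_matI)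
  fix i j assume "i < dim_row (kron dA dB (X * Z) (Y * W))" "j < dim_col (kron dA dB (X * Z) (Y * W))"
  then have ij: "i < dA * dB" "j < dA * dB" by (auto simp: kron_def)
  then have dB: "0 < dB" by (cases dB) auto
  have ia: "i div dB < dA" "j div dB < dA" using ij by (auto simp: div_less_iff_less_mult dB)
  have ib: "i mod dB < dB" "j mod dB < dB" using dB by auto
  have "(kron dA dB X Y * kron dA dB Z W) $$ (i, j) =
      (\<Sum>k<dA * dB. kron dA dB X Y $$ (i, k) * kron dA dB Z W $$ (k, j))"
    using ij by (simp add: mat_mult_index_sum[OF kron_carrier kron_carrier] del: index_mult_mat(1))
  also have "\<dots> = (\<Sum>a<dA. \<Sum>b<dB. kron dA dB X Y $$ (i, a * dB + b) * kron dA dB Z W $$ (a * dB + b, j))"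
    by (rule sum_lessThan_mult)
  also have "\<dots> = (\<Sum>a<dA. \<Sum>b<dB. (X $$ (i div dB, a) * Z $$ (a, j div dB)) * (Y $$ (i mod dB, b) * W $$ (b, j mod dB)))"
    using ij by (intro sum.cong refl) (simp add: kron_index mult_add_less_mult mult_ac)
  also have "\<dots> = (\<Sum>a<dA. X $$ (i div dB, a) * Z $$ (a, j div dB)) * (\<Sum>b<dB. Y $$ (i mod dB, b) * W $$ (b, j mod dB))"
    by (simp add: sum_product)
  also have "\<dots> = kron dA dB (X * Z) (Y * W) $$ (i, j)"
    using ij ia ib X Y Z W by (simp add: kron_index mat_mult_index_sum[OF X Z] mat_mult_index_sum[OF Y W] del: index_mult_mat(1))
  finally show "(kron dA dB X Y * kron dA dB Z W) $$ (i, j) = kron dA dB (X * Z) (Y * W) $$ (i, j)" .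
qed (auto simp: kron_def)

lemma kron_adjoint: "X \<in> carrier_mat dA dA \<Longrightarrow> Y \<in> carrier_mat dB dB \<Longrightarrow>
  adjoint (kron dA dB X Y) = kron dA dB (adjoint X) (adjoint Y)"
proof (rule eq_matI)
  assume X: "X \<in> carrier_mat dA dA" and Y: "Y \<in> carrier_mat dB dB"
  fix i j assume "i < dim_row (kron dA dB (adjoint X) (adjoint Y))" "j < dim_col (kron dA dB (adjoint X) (adjoint Y))"
  then have ij: "i < dA * dB" "j < dA * dB" by (auto simp: kron_def)
  then have dB: "0 < dB" by (cases dB) auto
  have ia: "i div dB < dA" "j div dB < dA" using ij by (auto simp: div_less_iff_less_mult dB)
  have ib: "i mod dB < dB" "j mod dB < dB" using dB by auto
  show "adjoint (kron dA dB X Y) $$ (i, j) = kron dA dB (adjoint X) (adjoint Y) $$ (i, j)"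
    using ij ia ib X Y by (simp add: kron_index)
qed (auto simp: kron_def)

lemma kron_one: "kron dA dB (1\<^sub>m dA) (1\<^sub>m dB) = 1\<^sub>m (dA * dB)"
proof (rule eq_matI)
  fix i j assume "i < dim_row (1\<^sub>m (dA * dB))" "j < dim_col (1\<^sub>m (dA * dB))"
  then have ij: "i < dA * dB" "j < dA * dB" by auto
  then have dB: "0 < dB" by (cases dB) auto
  have ia: "i div dB < dA" "j div dB < dA" using ij by (auto simp: div_less_iff_less_mult dB)
  have ib: "i mod dB < dB" "j mod dB < dB" using dB by auto
  have "(i div dB = j div dB \<and> i mod dB = j mod dB) = (i = j)"
    by (metis div_mult_mod_eq)
  then show "kron dA dB (1\<^sub>m dA) (1\<^sub>m dB) $$ (i, j) = 1\<^sub>m (dA * dB) $$ (i, j)"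
    using ij ia ib by (auto simp: kron_index)
qed (auto simp: kron_def)

lemma kron_minus_right: "X \<in> carrier_mat dA dA \<Longrightarrow> Y \<in> carrier_mat dB dB \<Longrightarrow> Z \<in> carrier_mat dB dB \<Longrightarrow>
  kron dA dB X (Y - Z) = kron dA dB X Y - kron dA dB X Z"
proof (rule eq_matI)
  assume X: "X \<in> carrier_mat dA dA" and Y: "Y \<in> carrier_mat dB dB" and Z: "Z \<in> carrier_mat dB dB"
  fix i j assume "i < dim_row (kron dA dB X Y - kron dA dB X Z)" "j < dim_col (kron dA dB X Y - kron dA dB X Z)"
  then have ij: "i < dA * dB" "j < dA * dB" by (auto simp: kron_def)
  then have dB: "0 < dB" by (cases dB) auto
  have ib: "i mod dB < dB" "j mod dB < dB" using dB by auto
  show "kron dA dB X (Y - Z) $$ (i, j) = (kron dA dB X Y - kron dA dB X Z) $$ (i, j)"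
    using ij ib Y Z by (simp add: kron_index algebra_simps)
qed (auto simp: kron_def)

lemma kron_minus_left: "X \<in> carrier_mat dA dA \<Longrightarrow> Z \<in> carrier_mat dA dA \<Longrightarrow> Y \<in> carrier_mat dB dB \<Longrightarrow>
  kron dA dB (X - Z) Y = kron dA dB X Y - kron dA dB Z Y"
proof (rule eq_matI)
  assume X: "X \<in> carrier_mat dA dA" and Z: "Z \<in> carrier_mat dA dA" and Y: "Y \<in> carrier_mat dB dB"
  fix i j assume "i < dim_row (kron dA dB X Y - kron dA dB Z Y)" "j < dim_col (kron dA dB X Y - kron dA dB Z Y)"
  then have ij: "i < dA * dB" "j < dA * dB" by (auto simp: kron_def)
  then have dB: "0 < dB" by (cases dB) auto
  have ia: "i div dB < dA" "j div dB < dA" using ij by (auto simp: div_less_iff_less_mult dB)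
  show "kron dA dB (X - Z) Y $$ (i, j) = (kron dA dB X Y - kron dA dB Z Y) $$ (i, j)"
    using ij ia X Z by (simp add: kron_index algebra_simps)
qed (auto simp: kron_def)

lemma kron_smult_right: "kron dA dB X (c \<cdot>\<^sub>m Y) = c \<cdot>\<^sub>m kron dA dB X Y" if "Y \<in> carrier_mat dB dB"
proof (rule eq_matI)
  fix i j assume "i < dim_row (c \<cdot>\<^sub>m kron dA dB X Y)" "j < dim_col (c \<cdot>\<^sub>m kron dA dB X Y)"
  then have ij: "i < dA * dB" "j < dA * dB" by (auto simp: kron_def)
  then have dB: "0 < dB" by (cases dB) auto
  have ib: "i mod dB < dB" "j mod dB < dB" using dB by auto
  show "kron dA dB X (c \<cdot>\<^sub>m Y) $$ (i, j) = (c \<cdot>\<^sub>m kron dA dB X Y) $$ (i, j)"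
    using ij ib that by (simp add: kron_index)
qed (auto simp: kron_def)

lemma kron_smult_left: "kron dA dB (c \<cdot>\<^sub>m X) Y = c \<cdot>\<^sub>m kron dA dB X Y" if "X \<in> carrier_mat dA dA"
proof (rule eq_matI)
  fix i j assume "i < dim_row (c \<cdot>\<^sub>m kron dA dB X Y)" "j < dim_col (c \<cdot>\<^sub>m kron dA dB X Y)"
  then have ij: "i < dA * dB" "j < dA * dB" by (auto simp: kron_def)
  then have dB: "0 < dB" by (cases dB) auto
  have ia: "i div dB < dA" "j div dB < dA" using ij by (auto simp: div_less_iff_less_mult dB)
  show "kron dA dB (c \<cdot>\<^sub>m X) Y $$ (i, j) = (c \<cdot>\<^sub>m kron dA dB X Y) $$ (i, j)"
    using ij ia that by (simp add: kron_index)
qed (auto simp: kron_def)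

lemma psd_mat_kron:
  assumes pX: "psd_mat dA X" and pY: "psd_mat dB Y"
  shows "psd_mat (dA * dB) (kron dA dB X Y)"
proof -
  obtain U where cU: "U \<in> carrier_mat dA dA" and XU: "X = U * adjoint U" using psd_mat_factor[OF pX] by blast
  obtain V where cV: "V \<in> carrier_mat dB dB" and YV: "Y = V * adjoint V" using psd_mat_factor[OF pY] by blast
  have "kron dA dB X Y = kron dA dB U V * 1\<^sub>m (dA * dB) * adjoint (kron dA dB U V)"
    unfolding XU YV using cU cV by (simp add: kron_adjoint kron_mult[OF cU adjoint_carrier[OF cU] cV adjoint_carrier[OF cV]])
  then show ?thesis using psd_mat_congruence[OF psd_mat_one kron_carrier] by simp
qed

lemma sum_square_le_mult_sum_squares:
  fixes t :: "nat \<Rightarrow> real"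
  shows "(\<Sum>b<d. t b)\<^sup>2 \<le> real d * (\<Sum>b<d. (t b)\<^sup>2)"
proof -
  have "0 \<le> (\<Sum>i<d. \<Sum>j<d. (t i - t j)\<^sup>2)" by (intro sum_nonneg) auto
  also have "\<dots> = (\<Sum>i<d. \<Sum>j<d. (t i)\<^sup>2 + (t j)\<^sup>2 - 2 * (t i * t j))"
    by (intro sum.cong refl) (simp add: power2_diff)
  also have "\<dots> = (\<Sum>i<d. real d * (t i)\<^sup>2 + (\<Sum>b<d. (t b)\<^sup>2) - 2 * t i * (\<Sum>b<d. t b))"
    by (intro sum.cong refl) (simp add: sum.distrib sum_subtractf sum_distrib_left mult.assoc)
  also have "\<dots> = real d * (\<Sum>b<d. (t b)\<^sup>2) + real d * (\<Sum>b<d. (t b)\<^sup>2) - 2 * (\<Sum>b<d. t b) * (\<Sum>b<d. t b)"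
    by (simp add: sum.distrib sum_subtractf sum_distrib_left[symmetric] sum_distrib_right[symmetric])
  also have "\<dots> = 2 * (real d * (\<Sum>b<d. (t b)\<^sup>2)) - 2 * (\<Sum>b<d. t b)\<^sup>2"
    by (simp add: power2_eq_square)
  finally show ?thesis by simp
qed

lemma norm_sum_square_le_mult_sum_squares:
  fixes c :: "nat \<Rightarrow> complex"
  shows "(cmod (\<Sum>b<d. c b))\<^sup>2 \<le> real d * (\<Sum>b<d. (cmod (c b))\<^sup>2)"
proof -
  have "cmod (\<Sum>b<d. c b) \<le> (\<Sum>b<d. cmod (c b))" by (rule norm_sum)
  then have "(cmod (\<Sum>b<d. c b))\<^sup>2 \<le> (\<Sum>b<d. cmod (c b))\<^sup>2"
    by (intro power_mono) auto
  also have "\<dots> \<le> real d * (\<Sum>b<d. (cmod (c b))\<^sup>2)" by (rule sum_square_le_mult_sum_squares)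
  finally show ?thesis .
qed

lemma psd_mat_sesq_sum_le:
  assumes p: "psd_mat n \<rho>" and v: "\<forall>i<n. v i = (\<Sum>b<d. u b i)"
  shows "Re (sesq \<rho> v v) \<le> real d * (\<Sum>b<d. Re (sesq \<rho> (u b) (u b)))"
proof -
  have c\<rho>: "\<rho> \<in> carrier_mat n n" using p by (rule psd_mat_carrier)
  obtain Y where cY: "Y \<in> carrier_mat n n" and rY: "\<rho> = Y * adjoint Y" using psd_mat_factor[OF p] by blast
  have rY': "\<rho> = Y * 1\<^sub>m n * adjoint Y" using rY cY by simp
  define z where "z w l = (\<Sum>i<n. cnj (Y $$ (i, l)) * w i)" for w l
  have qf: "Re (sesq \<rho> w w) = (\<Sum>l<n. (cmod (z w l))\<^sup>2)" for w
  proof -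
    have "sesq \<rho> w w = sesq (1\<^sub>m n) (z w) (z w)" unfolding rY' z_def by (rule sesq_congruence[OF cY one_carrier_mat])
    also have "\<dots> = (\<Sum>l<n. cnj (z w l) * z w l)" by (rule sesq_one)
    finally show ?thesis by (simp only: Re_sum Re_cnj_mult_self)
  qed
  have zv: "z v l = (\<Sum>b<d. z (u b) l)" for l
  proof -
    have "z v l = (\<Sum>i<n. \<Sum>b<d. cnj (Y $$ (i, l)) * u b i)"
      unfolding z_def using v by (simp add: sum_distrib_left)
    also have "\<dots> = (\<Sum>b<d. \<Sum>i<n. cnj (Y $$ (i, l)) * u b i)" by (rule sum.swap)
    finally show ?thesis by (simp add: z_def)
  qed
  have "Re (sesq \<rho> v v) = (\<Sum>l<n. (cmod (\<Sum>b<d. z (u b) l))\<^sup>2)" by (simp add: qf zv)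
  also have "\<dots> \<le> (\<Sum>l<n. real d * (\<Sum>b<d. (cmod (z (u b) l))\<^sup>2))"
    by (intro sum_mono norm_sum_square_le_mult_sum_squares)
  also have "\<dots> = real d * (\<Sum>l<n. \<Sum>b<d. (cmod (z (u b) l))\<^sup>2)"
    by (simp add: sum_distrib_left)
  also have "\<dots> = real d * (\<Sum>b<d. \<Sum>l<n. (cmod (z (u b) l))\<^sup>2)"
    by (subst sum.swap) (rule refl)
  also have "\<dots> = real d * (\<Sum>b<d. Re (sesq \<rho> (u b) (u b)))" by (simp add: qf)
  finally show ?thesis .
qed

lemma sum2_lessThan_mult:
  fixes dA dB :: nat
  shows "(\<Sum>i<dA * dB. \<Sum>j<dA * dB. g i j) =
    (\<Sum>a<dA. \<Sum>b<dB. \<Sum>a'<dA. \<Sum>b'<dB. g (a * dB + b) (a' * dB + b'))"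
  by (simp add: sum_lessThan_mult)

lemma sesq_kron_id_right:
  assumes cS: "S \<in> carrier_mat dA dA"
  shows "sesq (kron dA dB S (1\<^sub>m dB)) x x = (\<Sum>b<dB. sesq S (\<lambda>a. x (a * dB + b)) (\<lambda>a. x (a * dB + b)))"
proof -
  have "sesq (kron dA dB S (1\<^sub>m dB)) x x = (\<Sum>a<dA. \<Sum>b<dB. \<Sum>a'<dA. \<Sum>b'<dB.
      cnj (x (a * dB + b)) * kron dA dB S (1\<^sub>m dB) $$ (a * dB + b, a' * dB + b') * x (a' * dB + b'))"
    unfolding sesq_carrier[OF kron_carrier] by (rule sum2_lessThan_mult)
  also have "\<dots> = (\<Sum>a<dA. \<Sum>b<dB. \<Sum>a'<dA. \<Sum>b'<dB. if b' = b then cnj (x (a * dB + b)) * S $$ (a, a') * x (a' * dB + b) else 0)"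
    by (intro sum.cong refl) (auto simp: kron_index_blocks)
  also have "\<dots> = (\<Sum>a<dA. \<Sum>b<dB. \<Sum>a'<dA. cnj (x (a * dB + b)) * S $$ (a, a') * x (a' * dB + b))"
    by simp
  also have "\<dots> = (\<Sum>b<dB. \<Sum>a<dA. \<Sum>a'<dA. cnj (x (a * dB + b)) * S $$ (a, a') * x (a' * dB + b))"
    by (rule sum.swap)
  also have "\<dots> = (\<Sum>b<dB. sesq S (\<lambda>a. x (a * dB + b)) (\<lambda>a. x (a * dB + b)))"
    unfolding sesq_carrier[OF cS] by simp
  finally show ?thesis .
qed

lemma sesq_kron_id_left:
  assumes cS: "S \<in> carrier_mat dB dB"
  shows "sesq (kron dA dB (1\<^sub>m dA) S) x x = (\<Sum>a<dA. sesq S (\<lambda>b. x (a * dB + b)) (\<lambda>b. x (a * dB + b)))"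
proof -
  have "sesq (kron dA dB (1\<^sub>m dA) S) x x = (\<Sum>a<dA. \<Sum>b<dB. \<Sum>a'<dA. \<Sum>b'<dB.
      cnj (x (a * dB + b)) * kron dA dB (1\<^sub>m dA) S $$ (a * dB + b, a' * dB + b') * x (a' * dB + b'))"
    unfolding sesq_carrier[OF kron_carrier] by (rule sum2_lessThan_mult)
  also have "\<dots> = (\<Sum>a<dA. \<Sum>b<dB. \<Sum>a'<dA. if a' = a then (\<Sum>b'<dB. cnj (x (a * dB + b)) * S $$ (b, b') * x (a * dB + b')) else 0)"
    by (intro sum.cong refl) (auto simp: kron_index_blocks)
  also have "\<dots> = (\<Sum>a<dA. \<Sum>b<dB. \<Sum>b'<dB. cnj (x (a * dB + b)) * S $$ (b, b') * x (a * dB + b'))"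
    by simp
  also have "\<dots> = (\<Sum>a<dA. sesq S (\<lambda>b. x (a * dB + b)) (\<lambda>b. x (a * dB + b)))"
    unfolding sesq_carrier[OF cS] by simp
  finally show ?thesis .
qed

lemma marg_A_carrier[simp]: "marg_A dA dB R \<in> carrier_mat dA dA"
  by (simp add: marg_A_def)
lemma marg_B_carrier[simp]: "marg_B dA dB R \<in> carrier_mat dB dB"
  by (simp add: marg_B_def)
lemma marg_dims[simp]: "dim_row (marg_A dA dB R) = dA" "dim_col (marg_A dA dB R) = dA"
  "dim_row (marg_B dA dB R) = dB" "dim_col (marg_B dA dB R) = dB"
  by (simp_all add: marg_A_def marg_B_def)
lemma marg_A_index: "a < dA \<Longrightarrow> a' < dA \<Longrightarrow> marg_A dA dB R $$ (a, a') = (\<Sum>b<dB. R $$ (a * dB + b, a' * dB + b))"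
  by (simp add: marg_A_def)
lemma marg_B_index: "b < dB \<Longrightarrow> b' < dB \<Longrightarrow> marg_B dA dB R $$ (b, b') = (\<Sum>a<dA. R $$ (a * dB + b, a * dB + b'))"
  by (simp add: marg_B_def)

lemma sum_if_const: "(\<Sum>x\<in>A. if P then f x else 0) = (if P then (\<Sum>x\<in>A. f x) else (0::complex))"
  by (cases P) simp_all

lemma sesq_marg_A:
  assumes c\<rho>: "\<rho> \<in> carrier_mat (dA * dB) (dA * dB)"
  shows "sesq (marg_A dA dB \<rho>) v v = (\<Sum>b<dB. sesq \<rho> (\<lambda>i. if i mod dB = b then v (i div dB) else 0) (\<lambda>i. if i mod dB = b then v (i div dB) else 0))"
proof -
  let ?T = "\<lambda>a b a'. cnj (v a) * \<rho> $$ (a * dB + b, a' * dB + b) * v a'"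
  have "sesq (marg_A dA dB \<rho>) v v = (\<Sum>a<dA. \<Sum>a'<dA. \<Sum>b<dB. ?T a b a')"
    unfolding sesq_carrier[OF marg_A_carrier] by (intro sum.cong refl) (simp add: marg_A_index sum_distrib_left sum_distrib_right)
  also have "\<dots> = (\<Sum>a<dA. \<Sum>b<dB. \<Sum>a'<dA. ?T a b a')"
  proof -
    have e: "(\<Sum>a'<dA. \<Sum>b<dB. ?T a b a') = (\<Sum>b<dB. \<Sum>a'<dA. ?T a b a')" for a by (rule sum.swap)
    show ?thesis by (simp only: e)
  qed
  also have "\<dots> = (\<Sum>b<dB. \<Sum>a<dA. \<Sum>a'<dA. ?T a b a')" by (rule sum.swap)
  also have "\<dots> = (\<Sum>b<dB. sesq \<rho> (\<lambda>i. if i mod dB = b then v (i div dB) else 0) (\<lambda>i. if i mod dB = b then v (i div dB) else 0))"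
  proof (rule sum.cong[OF refl])
    fix b assume b: "b \<in> {..<dB}"
    let ?t = "\<lambda>i. if i mod dB = b then v (i div dB) else 0"
    have "sesq \<rho> ?t ?t = (\<Sum>a<dA. \<Sum>b1<dB. \<Sum>a'<dA. \<Sum>b2<dB.
        cnj (?t (a * dB + b1)) * \<rho> $$ (a * dB + b1, a' * dB + b2) * ?t (a' * dB + b2))"
      unfolding sesq_carrier[OF c\<rho>] by (rule sum2_lessThan_mult)
    also have "\<dots> = (\<Sum>a<dA. \<Sum>b1<dB. \<Sum>a'<dA. \<Sum>b2<dB. if b1 = b then (if b2 = b then ?T a b a' else 0) else 0)"
      by (intro sum.cong refl) (simp add: mult_add_div_eq mult_add_mod_eq)
    also have "\<dots> = (\<Sum>a<dA. \<Sum>a'<dA. ?T a b a')" using b by (simp add: sum_if_const)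
    finally show "(\<Sum>a<dA. \<Sum>a'<dA. ?T a b a') = sesq \<rho> ?t ?t" by simp
  qed
  finally show ?thesis .
qed

lemma sesq_marg_B:
  assumes c\<rho>: "\<rho> \<in> carrier_mat (dA * dB) (dA * dB)"
  shows "sesq (marg_B dA dB \<rho>) v v = (\<Sum>a<dA. sesq \<rho> (\<lambda>i. if i div dB = a then v (i mod dB) else 0) (\<lambda>i. if i div dB = a then v (i mod dB) else 0))"
proof -
  let ?T = "\<lambda>a b b'. cnj (v b) * \<rho> $$ (a * dB + b, a * dB + b') * v b'"
  have "sesq (marg_B dA dB \<rho>) v v = (\<Sum>b<dB. \<Sum>b'<dB. \<Sum>a<dA. ?T a b b')"
    unfolding sesq_carrier[OF marg_B_carrier] by (intro sum.cong refl) (simp add: marg_B_index sum_distrib_left sum_distrib_right)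
  also have "\<dots> = (\<Sum>b<dB. \<Sum>a<dA. \<Sum>b'<dB. ?T a b b')"
  proof -
    have e: "(\<Sum>b'<dB. \<Sum>a<dA. ?T a b b') = (\<Sum>a<dA. \<Sum>b'<dB. ?T a b b')" for b by (rule sum.swap)
    show ?thesis by (simp only: e)
  qed
  also have "\<dots> = (\<Sum>a<dA. \<Sum>b<dB. \<Sum>b'<dB. ?T a b b')" by (rule sum.swap)
  also have "\<dots> = (\<Sum>a<dA. sesq \<rho> (\<lambda>i. if i div dB = a then v (i mod dB) else 0) (\<lambda>i. if i div dB = a then v (i mod dB) else 0))"
  proof (rule sum.cong[OF refl])
    fix a assume a: "a \<in> {..<dA}"
    let ?t = "\<lambda>i. if i div dB = a then v (i mod dB) else 0"
    have "sesq \<rho> ?t ?t = (\<Sum>a1<dA. \<Sum>b1<dB. \<Sum>a2<dA. \<Sum>b2<dB.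
        cnj (?t (a1 * dB + b1)) * \<rho> $$ (a1 * dB + b1, a2 * dB + b2) * ?t (a2 * dB + b2))"
      unfolding sesq_carrier[OF c\<rho>] by (rule sum2_lessThan_mult)
    also have "\<dots> = (\<Sum>a1<dA. \<Sum>b1<dB. \<Sum>a2<dA. \<Sum>b2<dB. if a1 = a then (if a2 = a then ?T a b1 b2 else 0) else 0)"
      by (intro sum.cong refl) (simp add: mult_add_div_eq mult_add_mod_eq)
    also have "\<dots> = (\<Sum>a1<dA. if a1 = a then (\<Sum>b1<dB. \<Sum>a2<dA. if a2 = a then (\<Sum>b2<dB. ?T a b1 b2) else 0) else 0)"
      by (simp add: sum_if_const)
    also have "\<dots> = (\<Sum>b<dB. \<Sum>b'<dB. ?T a b b')" using a by simp
    finally show "(\<Sum>b<dB. \<Sum>b'<dB. ?T a b b') = sesq \<rho> ?t ?t" by simp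
  qed
  finally show ?thesis .
qed

lemma trace_kron_id_left:
  assumes c\<rho>: "\<rho> \<in> carrier_mat (dA * dB) (dA * dB)" and cX: "X \<in> carrier_mat dB dB"
  shows "mat_trace (\<rho> * kron dA dB (1\<^sub>m dA) X) = mat_trace (marg_B dA dB \<rho> * X)"
proof -
  let ?T = "\<lambda>a b b'. \<rho> $$ (a * dB + b, a * dB + b') * X $$ (b', b)"
  have "mat_trace (\<rho> * kron dA dB (1\<^sub>m dA) X) = (\<Sum>i<dA * dB. \<Sum>k<dA * dB. \<rho> $$ (i, k) * kron dA dB (1\<^sub>m dA) X $$ (k, i))"
    unfolding mat_trace_def using c\<rho> by (intro sum.cong refl) (simp_all add: mat_mult_index_sum[OF c\<rho> kron_carrier] del: index_mult_mat(1))
  also have "\<dots> = (\<Sum>a<dA. \<Sum>b<dB. \<Sum>a'<dA. \<Sum>b'<dB. \<rho> $$ (a * dB + b, a' * dB + b') * kron dA dB (1\<^sub>m dA) X $$ (a' * dB + b', a * dB + b))"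
    by (rule sum2_lessThan_mult)
  also have "\<dots> = (\<Sum>a<dA. \<Sum>b<dB. \<Sum>a'<dA. \<Sum>b'<dB. if a' = a then ?T a b b' else 0)"
    by (intro sum.cong refl) (simp add: kron_index_blocks)
  also have "\<dots> = (\<Sum>a<dA. \<Sum>b<dB. \<Sum>b'<dB. ?T a b b')" by (simp add: sum_if_const)
  also have "\<dots> = (\<Sum>b<dB. \<Sum>a<dA. \<Sum>b'<dB. ?T a b b')" by (rule sum.swap)
  also have "\<dots> = (\<Sum>b<dB. \<Sum>b'<dB. \<Sum>a<dA. ?T a b b')"
  proof -
    have e: "(\<Sum>a<dA. \<Sum>b'<dB. ?T a b b') = (\<Sum>b'<dB. \<Sum>a<dA. ?T a b b')" for b by (rule sum.swap)
    show ?thesis by (simp only: e)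
  qed
  also have "\<dots> = mat_trace (marg_B dA dB \<rho> * X)"
    unfolding mat_trace_def using cX
    by (intro sum.cong refl) (simp_all add: mat_mult_index_sum[OF marg_B_carrier cX] marg_B_index sum_distrib_right del: index_mult_mat(1))
  finally show ?thesis .
qed

lemma trace_kron_id_right:
  assumes c\<rho>: "\<rho> \<in> carrier_mat (dA * dB) (dA * dB)" and cX: "X \<in> carrier_mat dA dA"
  shows "mat_trace (\<rho> * kron dA dB X (1\<^sub>m dB)) = mat_trace (marg_A dA dB \<rho> * X)"
proof -
  let ?T = "\<lambda>a b a'. \<rho> $$ (a * dB + b, a' * dB + b) * X $$ (a', a)"
  have "mat_trace (\<rho> * kron dA dB X (1\<^sub>m dB)) = (\<Sum>i<dA * dB. \<Sum>k<dA * dB. \<rho> $$ (i, k) * kron dA dB X (1\<^sub>m dB) $$ (k, i))"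
    unfolding mat_trace_def using c\<rho> by (intro sum.cong refl) (simp_all add: mat_mult_index_sum[OF c\<rho> kron_carrier] del: index_mult_mat(1))
  also have "\<dots> = (\<Sum>a<dA. \<Sum>b<dB. \<Sum>a'<dA. \<Sum>b'<dB. \<rho> $$ (a * dB + b, a' * dB + b') * kron dA dB X (1\<^sub>m dB) $$ (a' * dB + b', a * dB + b))"
    by (rule sum2_lessThan_mult)
  also have "\<dots> = (\<Sum>a<dA. \<Sum>b<dB. \<Sum>a'<dA. \<Sum>b'<dB. if b' = b then ?T a b a' else 0)"
    by (intro sum.cong refl) (auto simp: kron_index_blocks)
  also have "\<dots> = (\<Sum>a<dA. \<Sum>b<dB. \<Sum>a'<dA. ?T a b a')" by simp
  also have "\<dots> = (\<Sum>a<dA. \<Sum>a'<dA. \<Sum>b<dB. ?T a b a')"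
  proof -
    have e: "(\<Sum>b<dB. \<Sum>a'<dA. ?T a b a') = (\<Sum>a'<dA. \<Sum>b<dB. ?T a b a')" for a by (rule sum.swap)
    show ?thesis by (simp only: e)
  qed
  also have "\<dots> = mat_trace (marg_A dA dB \<rho> * X)"
    unfolding mat_trace_def using cX
    by (intro sum.cong refl) (simp_all add: mat_mult_index_sum[OF marg_A_carrier cX] marg_A_index sum_distrib_right del: index_mult_mat(1))
  finally show ?thesis .
qed

lemma psd_mat_marg_A:
  assumes p: "psd_mat (dA * dB) \<rho>"
  shows "psd_mat dA (marg_A dA dB \<rho>)"
proof -
  have c\<rho>: "\<rho> \<in> carrier_mat (dA * dB) (dA * dB)" using p by (rule psd_mat_carrier)
  have h: "adjoint (marg_A dA dB \<rho>) = marg_A dA dB \<rho>"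
  proof (rule eq_matI)
    fix a a' assume "a < dim_row (marg_A dA dB \<rho>)" "a' < dim_col (marg_A dA dB \<rho>)"
    then have aa: "a < dA" "a' < dA" by auto
    have "adjoint (marg_A dA dB \<rho>) $$ (a, a') = (\<Sum>b<dB. cnj (\<rho> $$ (a' * dB + b, a * dB + b)))"
      using aa by (simp add: marg_A_index)
    also have "\<dots> = (\<Sum>b<dB. \<rho> $$ (a * dB + b, a' * dB + b))"
    proof (intro sum.cong refl)
      fix b assume "b \<in> {..<dB}"
      then have b: "b < dB" by simp
      show "cnj (\<rho> $$ (a' * dB + b, a * dB + b)) = \<rho> $$ (a * dB + b, a' * dB + b)"
        using psd_mat_entry[OF p mult_add_less_mult[OF aa(1) b] mult_add_less_mult[OF aa(2) b]] by simp
    qed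
    finally show "adjoint (marg_A dA dB \<rho>) $$ (a, a') = marg_A dA dB \<rho> $$ (a, a')"
      using aa by (simp add: marg_A_index)
  qed simp_all
  have "0 \<le> Re (sesq (marg_A dA dB \<rho>) v v)" for v
    unfolding sesq_marg_A[OF c\<rho>] Re_sum by (intro sum_nonneg) (simp add: psd_mat_sesq_nonneg[OF p])
  then show ?thesis unfolding psd_mat_iff_sesq using h by simp
qed

lemma psd_mat_marg_B:
  assumes p: "psd_mat (dA * dB) \<rho>"
  shows "psd_mat dB (marg_B dA dB \<rho>)"
proof -
  have c\<rho>: "\<rho> \<in> carrier_mat (dA * dB) (dA * dB)" using p by (rule psd_mat_carrier)
  have h: "adjoint (marg_B dA dB \<rho>) = marg_B dA dB \<rho>"
  proof (rule eq_matI)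
    fix b b' assume "b < dim_row (marg_B dA dB \<rho>)" "b' < dim_col (marg_B dA dB \<rho>)"
    then have bb: "b < dB" "b' < dB" by auto
    have "adjoint (marg_B dA dB \<rho>) $$ (b, b') = (\<Sum>a<dA. cnj (\<rho> $$ (a * dB + b', a * dB + b)))"
      using bb by (simp add: marg_B_index)
    also have "\<dots> = (\<Sum>a<dA. \<rho> $$ (a * dB + b, a * dB + b'))"
    proof (intro sum.cong refl)
      fix a assume "a \<in> {..<dA}"
      then have a: "a < dA" by simp
      show "cnj (\<rho> $$ (a * dB + b', a * dB + b)) = \<rho> $$ (a * dB + b, a * dB + b')"
        using psd_mat_entry[OF p mult_add_less_mult[OF a bb(1)] mult_add_less_mult[OF a bb(2)]] by simp
    qed
    finally show "adjoint (marg_B dA dB \<rho>) $$ (b, b') = marg_B dA dB \<rho> $$ (b, b')"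
      using bb by (simp add: marg_B_index)
  qed simp_all
  have "0 \<le> Re (sesq (marg_B dA dB \<rho>) v v)" for v
    unfolding sesq_marg_B[OF c\<rho>] Re_sum by (intro sum_nonneg) (simp add: psd_mat_sesq_nonneg[OF p])
  then show ?thesis unfolding psd_mat_iff_sesq using h by simp
qed

lemma trace_marg_A: "mat_trace (marg_A dA dB \<rho>) = mat_trace \<rho>" if "\<rho> \<in> carrier_mat (dA * dB) (dA * dB)"
proof -
  have "mat_trace (marg_A dA dB \<rho>) = (\<Sum>a<dA. \<Sum>b<dB. \<rho> $$ (a * dB + b, a * dB + b))"
    unfolding mat_trace_def by (simp add: marg_A_index)
  also have "\<dots> = mat_trace \<rho>" unfolding mat_trace_def using that by (simp add: sum_lessThan_mult)
  finally show ?thesis .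
qed

lemma trace_marg_B: "mat_trace (marg_B dA dB \<rho>) = mat_trace \<rho>" if "\<rho> \<in> carrier_mat (dA * dB) (dA * dB)"
proof -
  have "mat_trace (marg_B dA dB \<rho>) = (\<Sum>b<dB. \<Sum>a<dA. \<rho> $$ (a * dB + b, a * dB + b))"
    unfolding mat_trace_def by (simp add: marg_B_index)
  also have "\<dots> = (\<Sum>a<dA. \<Sum>b<dB. \<rho> $$ (a * dB + b, a * dB + b))" by (rule sum.swap)
  also have "\<dots> = mat_trace \<rho>" unfolding mat_trace_def using that by (simp add: sum_lessThan_mult)
  finally show ?thesis .
qed

lemma marg_A_dominates:
  assumes p: "psd_mat (dA * dB) \<rho>" and dB: "0 < dB"
  shows "psd_mat (dA * dB) (complex_of_real (real dB) \<cdot>\<^sub>m kron dA dB (marg_A dA dB \<rho>) (1\<^sub>m dB) - \<rho>)"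
proof -
  let ?n = "dA * dB"
  let ?K = "kron dA dB (marg_A dA dB \<rho>) (1\<^sub>m dB)"
  have c\<rho>: "\<rho> \<in> carrier_mat ?n ?n" using p by (rule psd_mat_carrier)
  have pA: "psd_mat dA (marg_A dA dB \<rho>)" by (rule psd_mat_marg_A[OF p])
  have hK: "adjoint ?K = ?K" using kron_adjoint[OF marg_A_carrier one_carrier_mat] psd_mat_adjoint[OF pA] by simp
  have cK: "?K \<in> carrier_mat ?n ?n" by simp
  have cM: "complex_of_real (real dB) \<cdot>\<^sub>m ?K \<in> carrier_mat ?n ?n" by simp
  have h: "adjoint (complex_of_real (real dB) \<cdot>\<^sub>m ?K - \<rho>) = complex_of_real (real dB) \<cdot>\<^sub>m ?K - \<rho>"
    using adjoint_minus[OF cM c\<rho>] hK psd_mat_adjoint[OF p] by (simp add: adjoint_smult)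
  have "Re (sesq \<rho> x x) \<le> real dB * Re (sesq ?K x x)" for x
  proof -
    define t where "t b b' = (\<lambda>i. if i mod dB = b' then x ((i div dB) * dB + b) else 0)" for b b'
    have K: "Re (sesq ?K x x) = (\<Sum>b<dB. \<Sum>b'<dB. Re (sesq \<rho> (t b b') (t b b')))"
      unfolding sesq_kron_id_right[OF marg_A_carrier] sesq_marg_A[OF c\<rho>] t_def Re_sum by simp
    have xs: "\<forall>i<?n. x i = (\<Sum>b<dB. t b b i)"
    proof (intro allI impI)
      fix i assume "i < ?n"
      have "(\<Sum>b<dB. t b b i) = x ((i div dB) * dB + i mod dB)"
        unfolding t_def using dB by (simp add: sum.delta' cong: if_cong)
      then show "x i = (\<Sum>b<dB. t b b i)" by simp
    qed
    have b1: "Re (sesq \<rho> x x) \<le> real dB * (\<Sum>b<dB. Re (sesq \<rho> (t b b) (t b b)))"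
      by (rule psd_mat_sesq_sum_le[OF p xs])
    have s: "(\<Sum>b<dB. Re (sesq \<rho> (t b b) (t b b))) \<le> (\<Sum>b<dB. \<Sum>b'<dB. Re (sesq \<rho> (t b b') (t b b')))"
      by (intro sum_mono member_le_sum) (auto intro: psd_mat_sesq_nonneg[OF p])
    have "real dB * (\<Sum>b<dB. Re (sesq \<rho> (t b b) (t b b))) \<le> real dB * (\<Sum>b<dB. \<Sum>b'<dB. Re (sesq \<rho> (t b b') (t b b')))"
      using s by (rule mult_left_mono) simp
    then show ?thesis unfolding K using b1 by linarith
  qed
  then have "0 \<le> Re (sesq (complex_of_real (real dB) \<cdot>\<^sub>m ?K - \<rho>) x x)" for x
    using sesq_minus[OF cM c\<rho>] sesq_smult[OF cK] by simp
  then show ?thesis unfolding psd_mat_iff_sesq using h cM c\<rho> by (simp add: minus_carrier_mat)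
qed

lemma marg_B_dominates:
  assumes p: "psd_mat (dA * dB) \<rho>"
  shows "psd_mat (dA * dB) (complex_of_real (real dA) \<cdot>\<^sub>m kron dA dB (1\<^sub>m dA) (marg_B dA dB \<rho>) - \<rho>)"
proof -
  let ?n = "dA * dB"
  let ?K = "kron dA dB (1\<^sub>m dA) (marg_B dA dB \<rho>)"
  have c\<rho>: "\<rho> \<in> carrier_mat ?n ?n" using p by (rule psd_mat_carrier)
  have pB: "psd_mat dB (marg_B dA dB \<rho>)" by (rule psd_mat_marg_B[OF p])
  have hK: "adjoint ?K = ?K" using kron_adjoint[OF one_carrier_mat marg_B_carrier] psd_mat_adjoint[OF pB] by simp
  have cK: "?K \<in> carrier_mat ?n ?n" by simp
  have cM: "complex_of_real (real dA) \<cdot>\<^sub>m ?K \<in> carrier_mat ?n ?n" by simp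
  have h: "adjoint (complex_of_real (real dA) \<cdot>\<^sub>m ?K - \<rho>) = complex_of_real (real dA) \<cdot>\<^sub>m ?K - \<rho>"
    using adjoint_minus[OF cM c\<rho>] hK psd_mat_adjoint[OF p] by (simp add: adjoint_smult)
  have "Re (sesq \<rho> x x) \<le> real dA * Re (sesq ?K x x)" for x
  proof -
    define t where "t a a' = (\<lambda>i. if i div dB = a' then x (a * dB + i mod dB) else 0)" for a a'
    have K: "Re (sesq ?K x x) = (\<Sum>a<dA. \<Sum>a'<dA. Re (sesq \<rho> (t a a') (t a a')))"
      unfolding sesq_kron_id_left[OF marg_B_carrier] sesq_marg_B[OF c\<rho>] t_def Re_sum by simp
    have xs: "\<forall>i<?n. x i = (\<Sum>a<dA. t a a i)"
    proof (intro allI impI)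
      fix i assume i: "i < ?n"
      then have dB: "0 < dB" by (cases dB) auto
      have ia: "i div dB < dA" using i by (simp add: div_less_iff_less_mult dB)
      have "(\<Sum>a<dA. t a a i) = x ((i div dB) * dB + i mod dB)"
        unfolding t_def using ia by (simp add: sum.delta' cong: if_cong)
      then show "x i = (\<Sum>a<dA. t a a i)" by simp
    qed
    have b1: "Re (sesq \<rho> x x) \<le> real dA * (\<Sum>a<dA. Re (sesq \<rho> (t a a) (t a a)))"
      by (rule psd_mat_sesq_sum_le[OF p xs])
    have s: "(\<Sum>a<dA. Re (sesq \<rho> (t a a) (t a a))) \<le> (\<Sum>a<dA. \<Sum>a'<dA. Re (sesq \<rho> (t a a') (t a a')))"
      by (intro sum_mono member_le_sum) (auto intro: psd_mat_sesq_nonneg[OF p])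
    have "real dA * (\<Sum>a<dA. Re (sesq \<rho> (t a a) (t a a))) \<le> real dA * (\<Sum>a<dA. \<Sum>a'<dA. Re (sesq \<rho> (t a a') (t a a')))"
      using s by (rule mult_left_mono) simp
    then show ?thesis unfolding K using b1 by linarith
  qed
  then have "0 \<le> Re (sesq (complex_of_real (real dA) \<cdot>\<^sub>m ?K - \<rho>) x x)" for x
    using sesq_minus[OF cM c\<rho>] sesq_smult[OF cK] by simp
  then show ?thesis unfolding psd_mat_iff_sesq using h cM c\<rho> by (simp add: minus_carrier_mat)
qed

section \<open>The main estimate\<close>

lemma trace_sandwich_kron_id_right:
  assumes c\<rho>: "\<rho> \<in> carrier_mat (dA * dB) (dA * dB)" and cX: "X \<in> carrier_mat dA dA"
  shows "mat_trace (kron dA dB X (1\<^sub>m dB) * \<rho> * kron dA dB X (1\<^sub>m dB)) = mat_trace (marg_A dA dB \<rho> * (X * X))"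
  using trace_sandwich[OF kron_carrier c\<rho>] kron_mult[OF cX cX one_carrier_mat one_carrier_mat]
    trace_kron_id_right[OF c\<rho>, of "X * X"] cX by simp

lemma trace_sandwich_kron_id_left:
  assumes c\<rho>: "\<rho> \<in> carrier_mat (dA * dB) (dA * dB)" and cX: "X \<in> carrier_mat dB dB"
  shows "mat_trace (kron dA dB (1\<^sub>m dA) X * \<rho> * kron dA dB (1\<^sub>m dA) X) = mat_trace (marg_B dA dB \<rho> * (X * X))"
  using trace_sandwich[OF kron_carrier c\<rho>] kron_mult[OF one_carrier_mat one_carrier_mat cX cX]
    trace_kron_id_left[OF c\<rho>, of "X * X"] cX by simp

lemma trace_povm_marginals_lower_bound_A:
  assumes \<rho>: "density_mat (dA * dB) \<rho>" and P: "povm_elem (dA * dB) P"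
    and t0: "0 < Re (mat_trace (P * \<rho>))" and dA: "0 < dA"
  shows "8 * (Re (mat_trace (P * \<rho>))) ^ 3 / (81 * (real dA)\<^sup>2) \<le>
    Re (mat_trace (P * kron dA dB (marg_A dA dB \<rho>) (marg_B dA dB \<rho>)))"
proof -
  define t where "t = Re (mat_trace (P * \<rho>))"
  define \<sigma>A where "\<sigma>A = marg_A dA dB \<rho>"
  define \<sigma>B where "\<sigma>B = marg_B dA dB \<rho>"
  define \<delta> where "\<delta> = 4 * t\<^sup>2 / (9 * real dA)"
  have p\<rho>: "psd_mat (dA * dB) \<rho>" and tr: "mat_trace \<rho> = 1" using \<rho> by (auto simp: density_mat_def)
  have c\<rho>: "\<rho> \<in> carrier_mat (dA * dB) (dA * dB)" using p\<rho> by (rule psd_mat_carrier)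
  have pA: "psd_mat dA \<sigma>A" and pB: "psd_mat dB \<sigma>B"
    unfolding \<sigma>A_def \<sigma>B_def using psd_mat_marg_A[OF p\<rho>] psd_mat_marg_B[OF p\<rho>] by auto
  have cA: "\<sigma>A \<in> carrier_mat dA dA" and cB: "\<sigma>B \<in> carrier_mat dB dB" unfolding \<sigma>A_def \<sigma>B_def by auto
  have "0 < \<delta>" unfolding \<delta>_def t_def using t0 dA by simp
  then obtain Q where cQ: "Q \<in> carrier_mat dA dA" and hQ: "adjoint Q = Q"
    and Q1: "psd_mat dA (\<sigma>A - complex_of_real \<delta> \<cdot>\<^sub>m (Q * Q))"
    and Q2: "Re (mat_trace (\<sigma>A * (Q * Q))) \<le> Re (mat_trace \<sigma>A)"
    and Q3: "Re (mat_trace (\<sigma>A * ((1\<^sub>m dA - Q) * (1\<^sub>m dA - Q)))) \<le> real dA * \<delta> / 4"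
    using exists_regularized_ratio[OF pA] by blast
  define R where "R = kron dA dB Q (1\<^sub>m dB)"
  have cQm: "1\<^sub>m dA - Q \<in> carrier_mat dA dA" using cQ by (simp add: minus_carrier_mat)
  have hR: "adjoint R = R" unfolding R_def using kron_adjoint[OF cQ one_carrier_mat] hQ by simp
  have RR: "Re (mat_trace (R * \<rho> * R)) \<le> 1"
    using Q2 trace_sandwich_kron_id_right[OF c\<rho> cQ] trace_marg_A[OF c\<rho>] tr
    unfolding R_def \<sigma>A_def by simp
  have "1\<^sub>m (dA * dB) - R = kron dA dB (1\<^sub>m dA - Q) (1\<^sub>m dB)"
    unfolding R_def using kron_minus_left[OF one_carrier_mat cQ one_carrier_mat] kron_one by simp
  then have SS: "Re (mat_trace ((1\<^sub>m (dA * dB) - R) * \<rho> * (1\<^sub>m (dA * dB) - R))) \<le> (t / 3)\<^sup>2"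
    using Q3 trace_sandwich_kron_id_right[OF c\<rho> cQm] dA
    unfolding \<sigma>A_def \<delta>_def by (simp add: power2_eq_square)
  have "R * kron dA dB (1\<^sub>m dA) \<sigma>B * R = kron dA dB (Q * Q) \<sigma>B"
    unfolding R_def
    using kron_mult[OF cQ one_carrier_mat one_carrier_mat cB] kron_mult[OF cQ cQ cB one_carrier_mat] cB cQ
    by simp
  moreover have "kron dA dB (\<sigma>A - complex_of_real \<delta> \<cdot>\<^sub>m (Q * Q)) \<sigma>B =
      kron dA dB \<sigma>A \<sigma>B - complex_of_real \<delta> \<cdot>\<^sub>m kron dA dB (Q * Q) \<sigma>B"
    using kron_minus_left[OF cA _ cB, of "complex_of_real \<delta> \<cdot>\<^sub>m (Q * Q)"]
      kron_smult_left[of "Q * Q" dA dB _ \<sigma>B] cQ by simp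
  ultimately have K: "psd_mat (dA * dB)
      (kron dA dB \<sigma>A \<sigma>B - complex_of_real \<delta> \<cdot>\<^sub>m (R * kron dA dB (1\<^sub>m dA) \<sigma>B * R))"
    using psd_mat_kron[OF Q1 pB] by simp
  show ?thesis
    using trace_povm_lower_bound[OF \<rho> P t_def t0[folded t_def] _ kron_carrier _ _ hR RR SS kron_carrier K[unfolded \<delta>_def]]
      marg_B_dominates[OF p\<rho>] dA unfolding R_def t_def \<sigma>A_def \<sigma>B_def by simp
qed

lemma trace_povm_marginals_lower_bound_B:
  assumes \<rho>: "density_mat (dA * dB) \<rho>" and P: "povm_elem (dA * dB) P"
    and t0: "0 < Re (mat_trace (P * \<rho>))" and dB: "0 < dB"
  shows "8 * (Re (mat_trace (P * \<rho>))) ^ 3 / (81 * (real dB)\<^sup>2) \<le>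
    Re (mat_trace (P * kron dA dB (marg_A dA dB \<rho>) (marg_B dA dB \<rho>)))"
proof -
  define t where "t = Re (mat_trace (P * \<rho>))"
  define \<sigma>A where "\<sigma>A = marg_A dA dB \<rho>"
  define \<sigma>B where "\<sigma>B = marg_B dA dB \<rho>"
  define \<delta> where "\<delta> = 4 * t\<^sup>2 / (9 * real dB)"
  have p\<rho>: "psd_mat (dA * dB) \<rho>" and tr: "mat_trace \<rho> = 1" using \<rho> by (auto simp: density_mat_def)
  have c\<rho>: "\<rho> \<in> carrier_mat (dA * dB) (dA * dB)" using p\<rho> by (rule psd_mat_carrier)
  have pA: "psd_mat dA \<sigma>A" and pB: "psd_mat dB \<sigma>B"
    unfolding \<sigma>A_def \<sigma>B_def using psd_mat_marg_A[OF p\<rho>] psd_mat_marg_B[OF p\<rho>] by auto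
  have cA: "\<sigma>A \<in> carrier_mat dA dA" and cB: "\<sigma>B \<in> carrier_mat dB dB" unfolding \<sigma>A_def \<sigma>B_def by auto
  have "0 < \<delta>" unfolding \<delta>_def t_def using t0 dB by simp
  then obtain Q where cQ: "Q \<in> carrier_mat dB dB" and hQ: "adjoint Q = Q"
    and Q1: "psd_mat dB (\<sigma>B - complex_of_real \<delta> \<cdot>\<^sub>m (Q * Q))"
    and Q2: "Re (mat_trace (\<sigma>B * (Q * Q))) \<le> Re (mat_trace \<sigma>B)"
    and Q3: "Re (mat_trace (\<sigma>B * ((1\<^sub>m dB - Q) * (1\<^sub>m dB - Q)))) \<le> real dB * \<delta> / 4"
    using exists_regularized_ratio[OF pB] by blast
  define R where "R = kron dA dB (1\<^sub>m dA) Q"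
  have cQm: "1\<^sub>m dB - Q \<in> carrier_mat dB dB" using cQ by (simp add: minus_carrier_mat)
  have hR: "adjoint R = R" unfolding R_def using kron_adjoint[OF one_carrier_mat cQ] hQ by simp
  have RR: "Re (mat_trace (R * \<rho> * R)) \<le> 1"
    using Q2 trace_sandwich_kron_id_left[OF c\<rho> cQ] trace_marg_B[OF c\<rho>] tr
    unfolding R_def \<sigma>B_def by simp
  have "1\<^sub>m (dA * dB) - R = kron dA dB (1\<^sub>m dA) (1\<^sub>m dB - Q)"
    unfolding R_def using kron_minus_right[OF one_carrier_mat one_carrier_mat cQ] kron_one by simp
  then have SS: "Re (mat_trace ((1\<^sub>m (dA * dB) - R) * \<rho> * (1\<^sub>m (dA * dB) - R))) \<le> (t / 3)\<^sup>2"
    using Q3 trace_sandwich_kron_id_left[OF c\<rho> cQm] dB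
    unfolding \<sigma>B_def \<delta>_def by (simp add: power2_eq_square)
  have "R * kron dA dB \<sigma>A (1\<^sub>m dB) * R = kron dA dB \<sigma>A (Q * Q)"
    unfolding R_def
    using kron_mult[OF one_carrier_mat cA cQ one_carrier_mat] kron_mult[OF cA one_carrier_mat cQ cQ] cA cQ
    by simp
  moreover have "kron dA dB \<sigma>A (\<sigma>B - complex_of_real \<delta> \<cdot>\<^sub>m (Q * Q)) =
      kron dA dB \<sigma>A \<sigma>B - complex_of_real \<delta> \<cdot>\<^sub>m kron dA dB \<sigma>A (Q * Q)"
    using kron_minus_right[OF cA cB, of "complex_of_real \<delta> \<cdot>\<^sub>m (Q * Q)"]
      kron_smult_right[of "Q * Q" dB dA \<sigma>A] cQ by simp
  ultimately have K: "psd_mat (dA * dB)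
      (kron dA dB \<sigma>A \<sigma>B - complex_of_real \<delta> \<cdot>\<^sub>m (R * kron dA dB \<sigma>A (1\<^sub>m dB) * R))"
    using psd_mat_kron[OF pA Q1] by simp
  show ?thesis
    using trace_povm_lower_bound[OF \<rho> P t_def t0[folded t_def] _ kron_carrier _ _ hR RR SS kron_carrier K[unfolded \<delta>_def]]
      marg_A_dominates[OF p\<rho> dB] dB unfolding R_def t_def \<sigma>A_def \<sigma>B_def by simp
qed

lemma neg_log2_cubic_bound:
  fixes x t d eps :: real
  assumes e0: "0 \<le> eps" and e1: "eps < 1" and te: "1 - eps \<le> t" and d: "1 \<le> d"
    and x: "8 * t ^ 3 / (81 * d\<^sup>2) \<le> x"
  shows "- log 2 x \<le> 2 * log 2 d + 3 * log 2 (1 / (1 - eps)) + 6 * log 2 3 - 4"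
proof -
  have t0: "0 < t" using te e1 by simp
  define y where "y = 8 * t ^ 3 / (81 * d\<^sup>2)"
  have y0: "0 < y" unfolding y_def using t0 d by simp
  have "log 2 y \<le> log 2 x" using x y0 unfolding y_def by simp
  moreover have "log 2 y = 3 + 3 * log 2 t - 4 * log 2 3 - 2 * log 2 d"
  proof -
    have "log 2 y = log 2 ((2::real) ^ 3 * t ^ 3) - log 2 ((3::real) ^ 4 * d\<^sup>2)"
    proof -
      have "y = ((2::real) ^ 3 * t ^ 3) / ((3::real) ^ 4 * d\<^sup>2)" unfolding y_def by simp
      then show ?thesis using t0 d by (simp only: log_divide) (auto intro!: log_divide)
    qed
    also have "\<dots> = 3 + 3 * log 2 t - (4 * log 2 3 + 2 * log 2 d)"
    proof -
      have a: "log 2 ((2::real) ^ 3 * t ^ 3) = log 2 ((2::real) ^ 3) + log 2 (t ^ 3)"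
        using t0 by (simp add: log_mult)
      have b: "log 2 ((3::real) ^ 4 * d\<^sup>2) = log 2 ((3::real) ^ 4) + log 2 (d\<^sup>2)"
        using d by (simp add: log_mult)
      have c: "log 2 ((2::real) ^ 3) = 3" by (subst log_nat_power) auto
      have e: "log 2 ((3::real) ^ 4) = 4 * log 2 3" by (subst log_nat_power) auto
      have f: "log 2 (t ^ 3) = 3 * log 2 t" using t0 by (subst log_nat_power) auto
      have g: "log 2 (d\<^sup>2) = 2 * log 2 d" using d by (subst log_nat_power) auto
      show ?thesis unfolding a b c e f g by simp
    qed
    finally show ?thesis by simp
  qed
  moreover have "log 2 (1 - eps) \<le> log 2 t" using te e1 by simp
  moreover have "log 2 (1 / (1 - eps)) = - log 2 (1 - eps)" using e1 by (simp add: log_divide)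
  moreover have "1 \<le> log 2 3" by simp
  ultimately show ?thesis by linarith
qed

lemma density_mat_dim_pos:
  assumes "density_mat n \<rho>"
  shows "0 < n"
proof (rule ccontr)
  assume "\<not> 0 < n"
  then have "mat_trace \<rho> = 0"
    using assms psd_mat_carrier[of n \<rho>] by (simp add: density_mat_def mat_trace_def)
  then show False using assms by (simp add: density_mat_def)
qed

theorem proposition1:
  fixes dA dB :: nat and eps :: real and \<rho> :: "complex mat"
  assumes "0 \<le> eps" and "eps < 1"
    and "density_mat (dA * dB) \<rho>"
  shows "hyp_test_MI dA dB eps \<rho> \<le>
    ereal (2 * log 2 (real (min dA dB)) + 3 * log 2 (1 / (1 - eps)) + 6 * log 2 3 - 4)"
  unfolding hyp_test_MI_def hyp_test_div_def
proof (rule SUP_least)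
  let ?\<beta> = "kron dA dB (marg_A dA dB \<rho>) (marg_B dA dB \<rho>)"
  fix P assume "P \<in> {P. povm_elem (dA * dB) P \<and> 1 - eps \<le> Re (mat_trace (P * \<rho>))}"
  then have P: "povm_elem (dA * dB) P" and t: "1 - eps \<le> Re (mat_trace (P * \<rho>))" by auto
  have d: "0 < dA" "0 < dB" using density_mat_dim_pos[OF assms(3)] by auto
  have t0: "0 < Re (mat_trace (P * \<rho>))" using t assms(2) by simp
  have bound: "8 * Re (mat_trace (P * \<rho>)) ^ 3 / (81 * (real (min dA dB))\<^sup>2) \<le> Re (mat_trace (P * ?\<beta>))"
    using trace_povm_marginals_lower_bound_A[OF assms(3) P t0 d(1)]
      trace_povm_marginals_lower_bound_B[OF assms(3) P t0 d(2)] by (cases "dA \<le> dB") auto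
  moreover have "0 < 8 * Re (mat_trace (P * \<rho>)) ^ 3 / (81 * (real (min dA dB))\<^sup>2)"
    using t0 d by simp
  ultimately show "(if Re (mat_trace (P * ?\<beta>)) = 0 then \<infinity> else ereal (- log 2 (Re (mat_trace (P * ?\<beta>)))))
      \<le> ereal (2 * log 2 (real (min dA dB)) + 3 * log 2 (1 / (1 - eps)) + 6 * log 2 3 - 4)"
    using neg_log2_cubic_bound[OF assms(1,2) t _ bound] d by simp
qed

end
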